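(* Let $\Sigma\in\mathbb{S}^d$ be a positive semidefinite sample correlation matrix (all diagonal entries equal to $1$, off-diagonal entries in $(-1,1)$), let $\lambda>0$, and let $S^{\mathrm{opt}}$ be the optimal solution of the Graphical Lasso $$\min_{S\succ 0}\; -\log\det(S)+\mathrm{trace}(\Sigma S)+\lambda\sum_{i\neq j}|S_{ij}|.$$ Let $\mathcal{G}$ be the graph on $\{1,\ldots,d\}$ with an edge $\{i,j\}$ ($i\ne j$) iff $|\Sigma_{ij}|>\lambda$, and let $C$ be the partial symmetric matrix specified on the pattern $E=\{(i,i)\}\cup\{(i,j):\{i,j\}\in\mathcal{G}\}$ by $C_{ii}=1$ and $C_{ij}=\Sigma_{ij}-\lambda\,\mathrm{sign}(\Sigma_{ij})$ for $\{i,j\}\in\mathcal{G}$. Assume that for all $i\neq j$, $S^{\mathrm{opt}}_{ij}\neq0$ if and only if $|\Sigma_{ij}|>\lambda$, and that $\lambda\geq 0.5$. Then: 1. $(S^{\mathrm{opt}})^{-1}$ is the unique max-det completion of $C$, i.e. the unique optimal solution of $\max\{\log\det X: X\succ0,\ X_{ij}=C_{ij}\text{ for all }(i,j)\in E\}$. 2. If moreover $\mathcal{G}$ is chordal, then, after relabeling the vertices so that $1,2,\ldots,d$ is a perfect elimination ordering of $\mathcal{G}$ and setting $I_j=\{i>j:\{i,j\}\in\mathcal{G}\}$, one has $S^{\mathrm{opt}}=LDL^{T}$, where $L$ is unit lower triangular with $L_{ij}=0$ for $i>j$, $i\notin I_j$, and $L_{I_jj}=-C_{I_jI_j}^{-1}C_{I_jj}$,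 and $D$ is diagonal with $D_{jj}=(C_{jj}+C_{I_jj}^{T}L_{I_jj})^{-1}$ (computed for $j=d,d-1,\ldots,1$).
   Context: A graph is chordal if it has no induced cycle of length greater than three. An ordering $1,\ldots,d$ of the vertices is a perfect elimination ordering if for every $j$ the set $I_j$ of neighbors of $j$ with larger index forms a clique; every chordal graph admits one. For index sets $I,J$, $C_{IJ}$ denotes the submatrix with rows $I$ and columns $J$; all entries of $C_{I_jI_j}$ and $C_{I_jj}$ are specified since $I_j\cup\{j\}$ is a clique. $\mathrm{sign}(x)$ is the sign of the scalar $x$. *)

theory Defs
  imports Complex_Main "Jordan_Normal_Form.Determinant" "Jordan_Normal_Form.DL_Submatrix"
    "Jordan_Normal_Form.Gauss_Jordan_Elimination"
begin

(* Matrices are JNF matrices of dimension d x d, indices 0..<d (vertex k+1 of the paper = index k). *)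

definition sym_mat :: "nat \<Rightarrow> real mat \<Rightarrow> bool" where
  "sym_mat d A \<longleftrightarrow> A \<in> carrier_mat d d \<and> A\<^sup>T = A"

definition psd_mat :: "nat \<Rightarrow> real mat \<Rightarrow> bool" where
  "psd_mat d A \<longleftrightarrow> sym_mat d A \<and> (\<forall>v \<in> carrier_vec d. v \<bullet> (A *\<^sub>v v) \<ge> 0)"

definition pd_mat :: "nat \<Rightarrow> real mat \<Rightarrow> bool" where
  "pd_mat d A \<longleftrightarrow> sym_mat d A \<and> (\<forall>v \<in> carrier_vec d. v \<noteq> 0\<^sub>v d \<longrightarrow> v \<bullet> (A *\<^sub>v v) > 0)"

definition mtrace :: "real mat \<Rightarrow> real" where
  "mtrace A = (\<Sum>i<dim_row A. A $$ (i,i))"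

definition sample_corr :: "nat \<Rightarrow> real mat \<Rightarrow> bool" where
  "sample_corr d \<Sigma> \<longleftrightarrow> psd_mat d \<Sigma> \<and> (\<forall>i<d. \<Sigma> $$ (i,i) = 1)
     \<and> (\<forall>i<d. \<forall>j<d. i \<noteq> j \<longrightarrow> -1 < \<Sigma> $$ (i,j) \<and> \<Sigma> $$ (i,j) < 1)"

definition glasso_obj :: "nat \<Rightarrow> real mat \<Rightarrow> real \<Rightarrow> real mat \<Rightarrow> real" where
  "glasso_obj d \<Sigma> lam S = - ln (det S) + mtrace (\<Sigma> * S)
      + lam * (\<Sum>i<d. \<Sum>j<d. if i \<noteq> j then \<bar>S $$ (i,j)\<bar> else 0)"

definition glasso_opt :: "nat \<Rightarrow> real mat \<Rightarrow> real \<Rightarrow> real mat \<Rightarrow> bool" where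
  "glasso_opt d \<Sigma> lam S \<longleftrightarrow> pd_mat d S \<and>
     (\<forall>S'. pd_mat d S' \<longrightarrow> glasso_obj d \<Sigma> lam S \<le> glasso_obj d \<Sigma> lam S')"

definition thr_adj :: "nat \<Rightarrow> real mat \<Rightarrow> real \<Rightarrow> nat \<Rightarrow> nat \<Rightarrow> bool" where
  "thr_adj d \<Sigma> lam i j \<longleftrightarrow> i < d \<and> j < d \<and> i \<noteq> j \<and> \<bar>\<Sigma> $$ (i,j)\<bar> > lam"

definition pattern :: "nat \<Rightarrow> real mat \<Rightarrow> real \<Rightarrow> (nat \<times> nat) set" where
  "pattern d \<Sigma> lam = {(i,i) | i. i < d} \<union> {(i,j). thr_adj d \<Sigma> lam i j}"

text \<open>the partial matrix C, represented as a full matrix whose entries outside the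
  pattern are set to 0 (they are never used)\<close>
definition Cpart :: "nat \<Rightarrow> real mat \<Rightarrow> real \<Rightarrow> real mat" where
  "Cpart d \<Sigma> lam = mat d d (\<lambda>(i,j). if i = j then 1
      else if thr_adj d \<Sigma> lam i j then \<Sigma> $$ (i,j) - lam * sgn (\<Sigma> $$ (i,j)) else 0)"

definition maxdet_feasible :: "nat \<Rightarrow> (nat \<times> nat) set \<Rightarrow> real mat \<Rightarrow> real mat \<Rightarrow> bool" where
  "maxdet_feasible d E C X \<longleftrightarrow> pd_mat d X \<and> (\<forall>(i,j) \<in> E. X $$ (i,j) = C $$ (i,j))"

definition unique_maxdet_completion :: "nat \<Rightarrow> (nat \<times> nat) set \<Rightarrow> real mat \<Rightarrow> real mat \<Rightarrow> bool" where
  "unique_maxdet_completion d E C X \<longleftrightarrow> maxdet_feasible d E C X \<and>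
     (\<forall>Y. maxdet_feasible d E C Y \<longrightarrow> Y \<noteq> X \<longrightarrow> ln (det Y) < ln (det X))"

definition chordal :: "nat \<Rightarrow> (nat \<Rightarrow> nat \<Rightarrow> bool) \<Rightarrow> bool" where
  "chordal d adj \<longleftrightarrow> (\<forall>vs. distinct vs \<and> set vs \<subseteq> {..<d} \<and> length vs \<ge> 4 \<and>
      (\<forall>k < length vs. adj (vs ! k) (vs ! ((k + 1) mod length vs))) \<longrightarrow>
      (\<exists>k < length vs. \<exists>l < length vs. k \<noteq> l \<and> l \<noteq> (k + 1) mod length vs
          \<and> k \<noteq> (l + 1) mod length vs \<and> adj (vs ! k) (vs ! l)))"

definition higher_nbrs :: "nat \<Rightarrow> (nat \<Rightarrow> nat \<Rightarrow> bool) \<Rightarrow> nat \<Rightarrow> nat set" where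
  "higher_nbrs d adj j = {i. j < i \<and> i < d \<and> adj i j}"

definition natural_peo :: "nat \<Rightarrow> (nat \<Rightarrow> nat \<Rightarrow> bool) \<Rightarrow> bool" where
  "natural_peo d adj \<longleftrightarrow> (\<forall>j<d. \<forall>a \<in> higher_nbrs d adj j. \<forall>b \<in> higher_nbrs d adj j.
       a \<noteq> b \<longrightarrow> adj a b)"

text \<open>L_{I_j j} = - C_{I_j I_j}^{-1} C_{I_j j}, as a vector indexed by positions in I_j
  (increasing order)\<close>
definition Lcol :: "real mat \<Rightarrow> nat set \<Rightarrow> nat \<Rightarrow> real vec" where
  "Lcol C I j = - (the (mat_inverse (submatrix C I I)) *\<^sub>v col (submatrix C I {j}) 0)"

definition Lmat :: "nat \<Rightarrow> (nat \<Rightarrow> nat \<Rightarrow> bool) \<Rightarrow> real mat \<Rightarrow> real mat" where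
  "Lmat d adj C = mat d d (\<lambda>(i,j). if i = j then 1
      else if i \<in> higher_nbrs d adj j
        then Lcol C (higher_nbrs d adj j) j $ card {a \<in> higher_nbrs d adj j. a < i}
      else 0)"

definition Dmat :: "nat \<Rightarrow> (nat \<Rightarrow> nat \<Rightarrow> bool) \<Rightarrow> real mat \<Rightarrow> real mat" where
  "Dmat d adj C = mat d d (\<lambda>(i,j). if i = j then
      inverse (C $$ (j,j) + col (submatrix C (higher_nbrs d adj j) {j}) 0
                 \<bullet> Lcol C (higher_nbrs d adj j) j)
      else 0)"

end

(* Let W be the inverse of S. Optimality of S along the symmetric directions E_ij gives
   W_ii = Sigma_ii = 1 and, wherever S_ij <> 0, W_ij = Sigma_ij + lambda sgn S_ij. As W is
   positive definite with unit diagonal, |W_ij| < 1; together with |Sigma_ij| > lambda >= 1/2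
   this forces sgn S_ij = - sgn Sigma_ij, so W agrees with C on the pattern E, while S vanishes
   off E. For every positive definite Y agreeing with C on E this gives tr (S Y) = tr (S W) = d,
   and ln det (S Y) <= tr (S Y) - d, with equality only for S Y = I, shows that W is the unique
   max-det completion.
   For the second part, a perfect elimination ordering means that the LDL^T factorization of S
   has no fill-in: column j of L is supported on {j} and I_j. Reading the identity
   W L = L^-T D^-1 on the clique {j} and I_j, where W coincides with C, gives
   C_{I_j I_j} L_{I_j j} = - C_{I_j j} and C_jj + C_{I_j j}^T L_{I_j j} = 1 / D_jj. *)

theory Submission
  imports Defs
begin

section \<open>Positive definite matrices and the LDL factorization\<close>

lemma index_mult_mat_sum:
  assumes "A \<in> carrier_mat nr n" "B \<in> carrier_mat n nc" "i < nr" "j < nc"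
  shows "(A * B) $$ (i,j) = (\<Sum>k<n. A $$ (i,k) * B $$ (k,j))"
  using assms by (simp add: scalar_prod_def atLeast0LessThan)

lemma index_mult_mat_vec_sum:
  assumes "A \<in> carrier_mat nr n" "v \<in> carrier_vec n" "i < nr"
  shows "(A *\<^sub>v v) $ i = (\<Sum>k<n. A $$ (i,k) * v $ k)"
  using assms by (simp add: scalar_prod_def atLeast0LessThan)

lemma scalar_prod_sum:
  assumes "v \<in> carrier_vec n" "w \<in> carrier_vec n"
  shows "v \<bullet> w = (\<Sum>k<n. v $ k * w $ k)"
  using assms by (simp add: scalar_prod_def atLeast0LessThan)

lemma quadratic_form_sum:
  assumes A: "A \<in> carrier_mat n n" and v: "v \<in> carrier_vec n"
  shows "v \<bullet> (A *\<^sub>v v) = (\<Sum>a<n. \<Sum>b<n. v $ a * A $$ (a,b) * v $ b)"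
proof -
  have "v \<bullet> (A *\<^sub>v v) = (\<Sum>a<n. v $ a * (A *\<^sub>v v) $ a)"
    using A v by (simp add: scalar_prod_sum)
  also have "\<dots> = (\<Sum>a<n. v $ a * (\<Sum>b<n. A $$ (a,b) * v $ b))"
    by (intro sum.cong refl arg_cong2[where f="(*)"] index_mult_mat_vec_sum[OF A v]) simp
  also have "\<dots> = (\<Sum>a<n. \<Sum>b<n. v $ a * A $$ (a,b) * v $ b)"
    by (simp add: sum_distrib_left mult.assoc)
  finally show ?thesis .
qed

lemma mtrace_mult_sum:
  assumes "A \<in> carrier_mat n n" "B \<in> carrier_mat n n"
  shows "mtrace (A * B) = (\<Sum>a<n. \<Sum>k<n. A $$ (a,k) * B $$ (k,a))"
  using assms unfolding mtrace_def by (intro sum.cong refl index_mult_mat_sum[OF assms]) auto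

lemma mtrace_mult_commute:
  assumes "A \<in> carrier_mat n n" "B \<in> carrier_mat n n"
  shows "mtrace (A * B) = mtrace (B * A)"
  unfolding mtrace_mult_sum[OF assms] mtrace_mult_sum[OF assms(2,1)]
  by (subst sum.swap) (simp add: mult.commute)

lemma sym_mat_index:
  assumes "sym_mat n A" "a < n" "b < n"
  shows "A $$ (a,b) = A $$ (b,a)"
  using assms unfolding sym_mat_def by (metis carrier_matD index_transpose_mat(1))

lemma pd_mat_sym: "pd_mat n A \<Longrightarrow> sym_mat n A"
  unfolding pd_mat_def by simp

lemma pd_mat_carrier: "pd_mat n A \<Longrightarrow> A \<in> carrier_mat n n"
  unfolding pd_mat_def sym_mat_def by simp

lemma pd_mat_index_sym: "pd_mat n A \<Longrightarrow> a < n \<Longrightarrow> b < n \<Longrightarrow> A $$ (a,b) = A $$ (b,a)"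
  using sym_mat_index pd_mat_sym by blast

definition pd_form :: "nat \<Rightarrow> (nat \<Rightarrow> nat \<Rightarrow> real) \<Rightarrow> bool" where
  "pd_form n A \<longleftrightarrow> (\<forall>a<n. \<forall>b<n. A a b = A b a) \<and>
     (\<forall>v. (\<exists>a<n. v a \<noteq> 0) \<longrightarrow> 0 < (\<Sum>a<n. \<Sum>b<n. v a * A a b * v b))"

lemma pd_form_pos: "pd_form n A \<Longrightarrow> \<exists>a<n. v a \<noteq> 0 \<Longrightarrow> 0 < (\<Sum>a<n. \<Sum>b<n. v a * A a b * v b)"
  unfolding pd_form_def by blast

lemma pd_form_nonneg:
  assumes "pd_form n A"
  shows "0 \<le> (\<Sum>a<n. \<Sum>b<n. v a * A a b * v b)"
proof (cases "\<exists>a<n. v a \<noteq> 0")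
  case True
  then show ?thesis using pd_form_pos[OF assms] less_imp_le by blast
qed simp

lemma pd_form_diag_pos:
  assumes "pd_form n A" "k < n"
  shows "0 < A k k"
proof -
  have "0 < (\<Sum>a<n. \<Sum>b<n. of_bool (a = k) * A a b * of_bool (b = k))"
    by (rule pd_form_pos[OF assms(1)]) (use assms(2) in auto)
  also have "(\<Sum>a<n. \<Sum>b<n. of_bool (a = k) * A a b * of_bool (b = k)) = A k k"
  proof -
    have "(\<Sum>b<n. of_bool (a = k) * A a b * of_bool (b = k)) = of_bool (a = k) * A k k" for a
      using assms(2) by (simp add: if_distrib[of "\<lambda>x. _ * x"] cong: if_cong)
    then show ?thesis using assms(2) by simp
  qed
  finally show ?thesis .
qed

lemma pd_mat_pd_form:
  assumes "pd_mat n S"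
  shows "pd_form n (\<lambda>a b. S $$ (a,b))"
  unfolding pd_form_def
proof (intro conjI allI impI)
  fix a b assume "a < n" "b < n"
  then show "S $$ (a,b) = S $$ (b,a)" using pd_mat_index_sym[OF assms] by blast
next
  fix v :: "nat \<Rightarrow> real" assume "\<exists>a<n. v a \<noteq> 0"
  then have "vec n v \<noteq> 0\<^sub>v n" by (metis index_vec index_zero_vec(1))
  then have "0 < vec n v \<bullet> (S *\<^sub>v vec n v)" using assms unfolding pd_mat_def by simp
  then show "0 < (\<Sum>a<n. \<Sum>b<n. v a * S $$ (a,b) * v b)"
    using quadratic_form_sum[OF pd_mat_carrier[OF assms], of "vec n v"] by simp
qed

lemma pd_form_pd_mat:
  assumes S: "sym_mat n S" and pd: "pd_form n (\<lambda>a b. S $$ (a,b))"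
  shows "pd_mat n S"
  unfolding pd_mat_def
proof (intro conjI S ballI impI)
  fix v :: "real vec" assume v: "v \<in> carrier_vec n" "v \<noteq> 0\<^sub>v n"
  then have "\<exists>a<n. v $ a \<noteq> 0" by (metis eq_vecI carrier_vecD index_zero_vec)
  then have "0 < (\<Sum>a<n. \<Sum>b<n. v $ a * S $$ (a,b) * v $ b)" by (rule pd_form_pos[OF pd])
  then show "0 < v \<bullet> (S *\<^sub>v v)"
    using quadratic_form_sum[of S n v] S v(1) unfolding sym_mat_def by simp
qed

text \<open>Completing the square: \<open>x\<^sub>0\<close> minimises the form of \<open>A\<close> over the first coordinate.\<close>

lemma quadratic_form_schur_complement:
  fixes A :: "nat \<Rightarrow> nat \<Rightarrow> real" and v :: "nat \<Rightarrow> real"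
  assumes sym: "\<And>a. a < n \<Longrightarrow> A (Suc a) 0 = A 0 (Suc a)" and p: "A 0 0 \<noteq> 0"
  defines "x \<equiv> \<lambda>k. if k = 0 then - (\<Sum>b<n. A 0 (Suc b) * v b) / A 0 0 else v (k - 1)"
  shows "(\<Sum>a<Suc n. \<Sum>b<Suc n. x a * A a b * x b)
    = (\<Sum>a<n. \<Sum>b<n. v a * (A (Suc a) (Suc b) - A (Suc a) 0 * A 0 (Suc b) / A 0 0) * v b)"
proof -
  define s where "s = (\<Sum>b<n. A 0 (Suc b) * v b)"
  define T where "T = (\<Sum>a<n. \<Sum>b<n. v a * A (Suc a) (Suc b) * v b)"
  have s': "(\<Sum>a<n. v a * A (Suc a) 0) = s"
    unfolding s_def by (intro sum.cong refl) (simp add: sym)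
  have "(\<Sum>a<Suc n. \<Sum>b<Suc n. x a * A a b * x b)
      = x 0 * A 0 0 * x 0 + (\<Sum>b<n. x 0 * A 0 (Suc b) * v b) + (\<Sum>a<n. v a * A (Suc a) 0 * x 0) + T"
    unfolding T_def x_def
    by (simp del: sum.lessThan_Suc add: sum.lessThan_Suc_shift sum.distrib sum_subtractf sum_negf)
  also have "\<dots> = x 0 * A 0 0 * x 0 + x 0 * s + s * x 0 + T"
  proof -
    have "(\<Sum>b<n. x 0 * A 0 (Suc b) * v b) = x 0 * s"
      unfolding s_def by (simp add: sum_distrib_left mult.assoc)
    moreover have "(\<Sum>a<n. v a * A (Suc a) 0 * x 0) = s * x 0"
      unfolding s'[symmetric] by (simp add: sum_distrib_right)
    ultimately show ?thesis by simp
  qed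
  also have "\<dots> = T - s * s / A 0 0"
    unfolding x_def s_def[symmetric] using p by (simp add: field_simps power2_eq_square)
  also have "\<dots> = T - (\<Sum>a<n. \<Sum>b<n. (v a * A (Suc a) 0) * (A 0 (Suc b) * v b)) / A 0 0"
    unfolding sum_product[symmetric] s' s_def ..
  also have "\<dots> = (\<Sum>a<n. \<Sum>b<n. v a * (A (Suc a) (Suc b) - A (Suc a) 0 * A 0 (Suc b) / A 0 0) * v b)"
    unfolding T_def by (simp add: algebra_simps sum_subtractf sum_divide_distrib)
  finally show ?thesis .
qed

lemma pd_form_schur_complement:
  assumes A: "pd_form (Suc n) A"
  shows "pd_form n (\<lambda>a b. A (Suc a) (Suc b) - A (Suc a) 0 * A 0 (Suc b) / A 0 0)"
  unfolding pd_form_def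
proof (intro conjI allI impI)
  have sym: "A a b = A b a" if "a < Suc n" "b < Suc n" for a b
    using A that unfolding pd_form_def by blast
  fix a b assume "a < n" "b < n"
  then show "A (Suc a) (Suc b) - A (Suc a) 0 * A 0 (Suc b) / A 0 0
      = A (Suc b) (Suc a) - A (Suc b) 0 * A 0 (Suc a) / A 0 0"
    using sym[of "Suc a" "Suc b"] sym[of "Suc a" 0] sym[of "Suc b" 0] by simp
next
  have sym: "A (Suc a) 0 = A 0 (Suc a)" if "a < n" for a
    using A that unfolding pd_form_def by blast
  have p: "A 0 0 \<noteq> 0" using pd_form_diag_pos[OF A] by (metis less_irrefl zero_less_Suc)
  fix v :: "nat \<Rightarrow> real" assume "\<exists>a<n. v a \<noteq> 0"
  then obtain a where "a < n" "v a \<noteq> 0" by blast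
  then have "\<exists>a<Suc n. (if a = 0 then - (\<Sum>b<n. A 0 (Suc b) * v b) / A 0 0 else v (a - 1)) \<noteq> 0"
    by (intro exI[of _ "Suc a"]) auto
  from pd_form_pos[OF A this]
  show "0 < (\<Sum>a<n. \<Sum>b<n. v a * (A (Suc a) (Suc b) - A (Suc a) 0 * A 0 (Suc b) / A 0 0) * v b)"
    by (simp only: quadratic_form_schur_complement[OF sym p])
qed

lemma pd_form_LDLT:
  "pd_form n A \<Longrightarrow> \<exists>L D. (\<forall>a. L a a = 1) \<and> (\<forall>a b. a < b \<longrightarrow> L a b = 0) \<and> (\<forall>k<n. 0 < D k)
     \<and> (\<forall>a<n. \<forall>b<n. A a b = (\<Sum>k<n. L a k * D k * L b k))"
proof (induction n arbitrary: A)
  case 0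
  show ?case by (intro exI[of _ "\<lambda>a b. of_bool (a = b)"] exI[of _ "\<lambda>_. 1"]) auto
next
  case (Suc n)
  have sym: "A a b = A b a" if "a < Suc n" "b < Suc n" for a b
    using Suc.prems that unfolding pd_form_def by blast
  define p where "p = A 0 0"
  have p: "0 < p" unfolding p_def by (rule pd_form_diag_pos[OF Suc.prems]) simp
  obtain L' D' where L': "\<forall>a. L' a a = 1" "\<forall>a b. a < b \<longrightarrow> L' a b = 0" "\<forall>k<n. 0 < D' k"
    and fac': "\<forall>a<n. \<forall>b<n. A (Suc a) (Suc b) - A (Suc a) 0 * A 0 (Suc b) / p
                          = (\<Sum>k<n. L' a k * D' k * L' b k)"
    using Suc.IH[OF pd_form_schur_complement[OF Suc.prems]] unfolding p_def by blast
  define L where "L a b = (if b = 0 then (if a = 0 then 1 else A a 0 / p)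
       else if a = 0 then 0 else L' (a - 1) (b - 1))" for a b
  define D where "D k = (if k = 0 then p else D' (k - 1))" for k
  have "A a b = (\<Sum>k<Suc n. L a k * D k * L b k)" if ab: "a < Suc n" "b < Suc n" for a b
  proof -
    have "(\<Sum>k<Suc n. L a k * D k * L b k) = L a 0 * p * L b 0 + (\<Sum>k<n. L a (Suc k) * D' k * L b (Suc k))"
      by (simp del: sum.lessThan_Suc add: sum.lessThan_Suc_shift D_def)
    also have "\<dots> = A a b"
    proof (cases a; cases b)
      fix a' b' assume "a = Suc a'" "b = Suc b'"
      then show ?thesis using fac' ab p sym[of 0 b] by (simp add: L_def field_simps)
    qed (use p sym[of 0 b] ab in \<open>auto simp: L_def p_def\<close>)
    finally show ?thesis by simp
  qed
  moreover have "\<forall>a. L a a = 1" "\<forall>a b. a < b \<longrightarrow> L a b = 0" "\<forall>k<Suc n. 0 < D k"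
    using L' p by (auto simp: L_def D_def)
  ultimately show ?case by blast
qed

definition unit_lower_triangular :: "nat \<Rightarrow> real mat \<Rightarrow> bool" where
  "unit_lower_triangular n L \<longleftrightarrow> L \<in> carrier_mat n n \<and> (\<forall>a<n. L $$ (a,a) = 1)
     \<and> (\<forall>a b. a < b \<longrightarrow> b < n \<longrightarrow> L $$ (a,b) = 0)"

lemma LDLT_index:
  assumes L: "L \<in> carrier_mat n n" and ab: "a < n" "b < n"
  shows "(L * mat_diag n D * L\<^sup>T) $$ (a,b) = (\<Sum>k<n. L $$ (a,k) * D k * L $$ (b,k))"
proof -
  have LD: "L * mat_diag n D = mat n n (\<lambda>(i,j). L $$ (i,j) * D j)"
    by (rule mat_diag_mult_right[OF L])
  show ?thesis unfolding LD using L ab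
    by (subst index_mult_mat_sum[of _ n n]) auto
qed

lemma pd_mat_LDLT:
  assumes "pd_mat n S"
  obtains L D where "unit_lower_triangular n L" "\<forall>k<n. 0 < D k" "S = L * mat_diag n D * L\<^sup>T"
proof -
  obtain L D where LD: "\<forall>a. L a a = 1" "\<forall>a b. a < b \<longrightarrow> L a b = 0" "\<forall>k<n. 0 < D k"
    "\<forall>a<n. \<forall>b<n. S $$ (a,b) = (\<Sum>k<n. L a k * D k * L b k)"
    using pd_form_LDLT[OF pd_mat_pd_form[OF assms]] by blast
  let ?L = "mat n n (\<lambda>(a,b). L a b)"
  have "S = ?L * mat_diag n D * ?L\<^sup>T"
  proof (rule eq_matI)
    fix a b assume "a < dim_row (?L * mat_diag n D * ?L\<^sup>T)" "b < dim_col (?L * mat_diag n D * ?L\<^sup>T)"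
    then have "a < n" "b < n" by auto
    then show "S $$ (a,b) = (?L * mat_diag n D * ?L\<^sup>T) $$ (a,b)"
      using LD(4) by (subst LDLT_index) auto
  qed (use pd_mat_carrier[OF assms] in auto)
  moreover have "unit_lower_triangular n ?L"
    unfolding unit_lower_triangular_def using LD(1,2) by auto
  ultimately show ?thesis using that LD(3) by blast
qed

lemma det_unit_lower_triangular:
  assumes "unit_lower_triangular n L"
  shows "det L = 1"
proof -
  have L: "L \<in> carrier_mat n n" using assms unfolding unit_lower_triangular_def by simp
  have "det L = prod_list (diag_mat L)"
    using assms unfolding unit_lower_triangular_def by (intro det_lower_triangular[of n]) auto
  also have "diag_mat L = replicate n 1"
    using assms unfolding unit_lower_triangular_def diag_mat_def by (auto intro!: nth_equalityI)
  finally show ?thesis by (simp add: prod_list_replicate)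
qed

lemma det_mat_diag: "det (mat_diag n D) = (\<Prod>k<n. D k)"
proof -
  have "det (mat_diag n D) = prod_list (diag_mat (mat_diag n D))"
    by (rule det_lower_triangular[of n]) (auto simp: mat_diag_def)
  also have "diag_mat (mat_diag n D) = map D [0..<n]"
    by (simp add: diag_mat_def mat_diag_def)
  finally show ?thesis by (simp add: prod.distinct_set_conv_list[symmetric] atLeast0LessThan)
qed

lemma det_LDLT:
  assumes "unit_lower_triangular n L"
  shows "det (L * mat_diag n D * L\<^sup>T) = (\<Prod>k<n. D k)"
proof -
  have L: "L \<in> carrier_mat n n" using assms unfolding unit_lower_triangular_def by simp
  have "det (L * mat_diag n D * L\<^sup>T) = det L * det (mat_diag n D) * det L"
    using L by (simp add: det_mult[of _ n] det_transpose)
  then show ?thesis by (simp add: det_unit_lower_triangular[OF assms] det_mat_diag)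
qed

lemma pd_mat_det_pos:
  assumes "pd_mat n M"
  shows "0 < det M"
proof -
  obtain L D where "unit_lower_triangular n L" "\<forall>k<n. 0 < D k" "M = L * mat_diag n D * L\<^sup>T"
    using pd_mat_LDLT[OF assms] .
  then show ?thesis by (auto simp: det_LDLT intro!: prod_pos)
qed

lemma pd_mat_diag_pos: "pd_mat n W \<Longrightarrow> k < n \<Longrightarrow> 0 < W $$ (k,k)"
  using pd_form_diag_pos pd_mat_pd_form by blast

lemma pd_mat_inverse:
  assumes S: "pd_mat n S"
  obtains W where "mat_inverse S = Some W" "S * W = 1\<^sub>m n" "W * S = 1\<^sub>m n" "pd_mat n W"
proof -
  have Sc: "S \<in> carrier_mat n n" using pd_mat_carrier[OF S] .
  have ST: "S\<^sup>T = S" using S unfolding pd_mat_def sym_mat_def by auto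
  have "S \<in> Units (ring_mat TYPE(real) n ())"
    using det_non_zero_imp_unit[OF Sc] pd_mat_det_pos[OF S] by simp
  then obtain W where W: "mat_inverse S = Some W"
    using mat_inverse(1)[OF Sc, where b="()"] by fastforce
  from mat_inverse(2)[OF Sc W] have SW: "S * W = 1\<^sub>m n" "W * S = 1\<^sub>m n" "W \<in> carrier_mat n n" by auto
  have WTS: "W\<^sup>T * S = 1\<^sub>m n" using SW(1) transpose_mult[OF Sc SW(3)] ST by simp
  have "W\<^sup>T = W\<^sup>T * (S * W)" using SW by simp
  also have "\<dots> = (W\<^sup>T * S) * W" using Sc SW(3) by (metis assoc_mult_mat transpose_carrier_mat)
  finally have "W\<^sup>T = W" using WTS SW(3) by simp
  have "pd_mat n W"
    unfolding pd_mat_def sym_mat_def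
  proof (intro conjI ballI impI SW(3) \<open>W\<^sup>T = W\<close>)
    fix v :: "real vec" assume v: "v \<in> carrier_vec n" "v \<noteq> 0\<^sub>v n"
    define u where "u = W *\<^sub>v v"
    have u: "u \<in> carrier_vec n" unfolding u_def using SW(3) v by simp
    have Su: "S *\<^sub>v u = v" unfolding u_def using SW Sc v
      by (metis assoc_mult_mat_vec one_mult_mat_vec)
    then have "u \<noteq> 0\<^sub>v n" using Sc v by auto
    then have "0 < u \<bullet> (S *\<^sub>v u)" using S u unfolding pd_mat_def by auto
    also have "u \<bullet> (S *\<^sub>v u) = u \<bullet> v" using Su by simp
    also have "\<dots> = v \<bullet> (W *\<^sub>v v)" unfolding u_def by (rule comm_scalar_prod[of _ n]) (use SW(3) v in auto)
    finally show "0 < v \<bullet> (W *\<^sub>v v)" .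
  qed
  then show ?thesis using that W SW by blast
qed

section \<open>The log-determinant inequality and max-det completions\<close>

lemma mtrace_LDLT:
  assumes "L \<in> carrier_mat n n"
  shows "mtrace (L * mat_diag n D * L\<^sup>T) = (\<Sum>k<n. D k * (\<Sum>a<n. (L $$ (a,k))\<^sup>2))"
proof -
  have "mtrace (L * mat_diag n D * L\<^sup>T) = (\<Sum>a<n. \<Sum>k<n. L $$ (a,k) * D k * L $$ (a,k))"
    using assms by (simp add: mtrace_def LDLT_index del: index_mult_mat(1))
  also have "\<dots> = (\<Sum>k<n. \<Sum>a<n. L $$ (a,k) * D k * L $$ (a,k))" by (rule sum.swap)
  finally show ?thesis by (simp add: sum_distrib_left power2_eq_square mult_ac)
qed

lemma mtrace_minus_ln_det_LDLT:
  assumes L: "unit_lower_triangular n L" and D: "\<forall>k<n. 0 < D k"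
  shows "mtrace (L * mat_diag n D * L\<^sup>T) - n - ln (det (L * mat_diag n D * L\<^sup>T))
    = (\<Sum>k<n. (D k - 1 - ln (D k)) + D k * (\<Sum>a\<in>{..<n} - {k}. (L $$ (a,k))\<^sup>2))"
proof -
  have Lc: "L \<in> carrier_mat n n" and L1: "\<forall>a<n. L $$ (a,a) = 1"
    using L unfolding unit_lower_triangular_def by auto
  have "(\<Sum>a<n. (L $$ (a,k))\<^sup>2) = 1 + (\<Sum>a\<in>{..<n} - {k}. (L $$ (a,k))\<^sup>2)" if "k < n" for k
    using that L1 by (subst sum.remove[of _ k]) auto
  then have "mtrace (L * mat_diag n D * L\<^sup>T) = (\<Sum>k<n. D k * (1 + (\<Sum>a\<in>{..<n} - {k}. (L $$ (a,k))\<^sup>2)))"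
    unfolding mtrace_LDLT[OF Lc] by simp
  moreover have "ln (det (L * mat_diag n D * L\<^sup>T)) = (\<Sum>k<n. ln (D k))"
    unfolding det_LDLT[OF L] using D by (subst ln_prod) auto
  ultimately show ?thesis by (simp add: sum.distrib sum_subtractf algebra_simps)
qed

text \<open>The identity above writes \<open>tr M - n - ln det M\<close> as a sum of nonnegative terms, since
  \<open>ln x \<le> x - 1\<close>; they all vanish only for \<open>D = 1\<close> and \<open>L = 1\<close>.\<close>

lemma ln_det_le_mtrace:
  assumes "pd_mat n M"
  shows "ln (det M) \<le> mtrace M - n" and "ln (det M) = mtrace M - n \<Longrightarrow> M = 1\<^sub>m n"
proof -
  obtain L D where L: "unit_lower_triangular n L" and D: "\<forall>k<n. 0 < D k"
    and M: "M = L * mat_diag n D * L\<^sup>T"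
    using pd_mat_LDLT[OF assms] .
  have Lc: "L \<in> carrier_mat n n" and L1: "\<forall>a<n. L $$ (a,a) = 1"
    using L unfolding unit_lower_triangular_def by auto
  define off where "off k = (\<Sum>a\<in>{..<n} - {k}. (L $$ (a,k))\<^sup>2)" for k
  define gap where "gap k = (D k - 1 - ln (D k)) + D k * off k" for k
  have gap: "mtrace M - n - ln (det M) = (\<Sum>k<n. gap k)"
    unfolding M mtrace_minus_ln_det_LDLT[OF L D] gap_def off_def ..
  have off_nonneg: "0 \<le> off k" for k unfolding off_def by (simp add: sum_nonneg)
  have gap_parts: "0 \<le> D k - 1 - ln (D k)" "0 \<le> D k * off k" if "k < n" for k
    using D that off_nonneg ln_le_minus_one[of "D k"] by auto
  have "0 \<le> (\<Sum>k<n. gap k)" using gap_parts by (auto simp: gap_def intro!: sum_nonneg)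
  then show "ln (det M) \<le> mtrace M - n" using gap by simp
  assume "ln (det M) = mtrace M - n"
  then have "(\<Sum>k<n. gap k) = 0" using gap by simp
  then have "gap k = 0" if "k < n" for k
    using gap_parts that by (subst (asm) sum_nonneg_eq_0_iff) (auto simp: gap_def)
  then have parts0: "D k - 1 - ln (D k) = 0 \<and> D k * off k = 0" if "k < n" for k
    using gap_parts[OF that] that unfolding gap_def by (metis add_nonneg_eq_0_iff)
  have D1: "D k = 1" if "k < n" for k
    using D that parts0[OF that] ln_eq_minus_one[of "D k"] by auto
  have off0: "off k = 0" if "k < n" for k
    using D1[OF that] parts0[OF that] by simp
  have "L $$ (a,k) = 0" if "a < n" "k < n" "a \<noteq> k" for a k
    using off0[OF that(2)] that unfolding off_def by (subst (asm) sum_nonneg_eq_0_iff) auto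
  then have "L = 1\<^sub>m n" using Lc L1 by (intro eq_matI) auto
  moreover have "mat_diag n D = 1\<^sub>m n" using D1 by (intro eq_matI) (auto simp: mat_diag_def)
  ultimately show "M = 1\<^sub>m n" unfolding M by simp
qed

lemma pd_mat_factor:
  assumes "pd_mat n S"
  obtains R where "R \<in> carrier_mat n n" "det R \<noteq> 0" "R * R\<^sup>T = S"
proof -
  obtain L D where L: "unit_lower_triangular n L" and D: "\<forall>k<n. 0 < D k"
    and S: "S = L * mat_diag n D * L\<^sup>T"
    using pd_mat_LDLT[OF assms] .
  have Lc: "L \<in> carrier_mat n n" using L unfolding unit_lower_triangular_def by simp
  define H where "H = mat_diag n (\<lambda>k. sqrt (D k))"
  have H: "H \<in> carrier_mat n n" "H\<^sup>T = H" "H * H = mat_diag n D"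
    using D unfolding H_def mat_diag_diag by (auto intro!: eq_matI simp: mat_diag_def)
  have "H * (H * L\<^sup>T) = mat_diag n D * L\<^sup>T"
    using assoc_mult_mat[of H n n H n "L\<^sup>T" n] H Lc by simp
  then have "L * H * (L * H)\<^sup>T = L * mat_diag n D * L\<^sup>T"
    using Lc H by (simp add: transpose_mult[of L n n H n] assoc_mult_mat[of _ n n _ n _ n])
  moreover have "det (L * H) \<noteq> 0"
    using D det_mult[OF Lc H(1)] det_unit_lower_triangular[OF L] unfolding H_def det_mat_diag
    by (simp add: less_imp_neq[symmetric])
  ultimately show ?thesis using that[of "L * H"] Lc H(1) S by simp
qed

lemma pd_mat_congruence:
  assumes Y: "pd_mat n Y" and R: "R \<in> carrier_mat n n" "det R \<noteq> 0"
  shows "pd_mat n (R\<^sup>T * Y * R)"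
  unfolding pd_mat_def sym_mat_def
proof (intro conjI ballI impI)
  have Yc: "Y \<in> carrier_mat n n" and YT: "Y\<^sup>T = Y"
    using Y unfolding pd_mat_def sym_mat_def by auto
  show "R\<^sup>T * Y * R \<in> carrier_mat n n" using Yc R by simp
  show "(R\<^sup>T * Y * R)\<^sup>T = R\<^sup>T * Y * R"
    using Yc R YT by (simp add: transpose_mult[of _ n n _ n] assoc_mult_mat[of _ n n _ n _ n])
  fix v :: "real vec" assume v: "v \<in> carrier_vec n" "v \<noteq> 0\<^sub>v n"
  define u where "u = R *\<^sub>v v"
  have u: "u \<in> carrier_vec n" unfolding u_def using R v by simp
  have "u \<noteq> 0\<^sub>v n" using det_0_iff_vec_prod_zero[OF R(1)] R(2) v unfolding u_def by blast
  then have "0 < u \<bullet> (Y *\<^sub>v u)" using Y u unfolding pd_mat_def by auto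
  also have "u \<bullet> (Y *\<^sub>v u) = (R\<^sup>T *\<^sub>v (Y *\<^sub>v u)) \<bullet> v"
    using transpose_vec_mult_scalar[OF R(1) v(1), of "Y *\<^sub>v u"] comm_scalar_prod[OF u, of "Y *\<^sub>v u"] Yc u
    unfolding u_def by simp
  also have "\<dots> = v \<bullet> ((R\<^sup>T * Y * R) *\<^sub>v v)"
    using R Yc v unfolding u_def
    by (subst comm_scalar_prod[of _ n]) (auto simp: assoc_mult_mat_vec[of _ n n _ n])
  finally show "0 < v \<bullet> ((R\<^sup>T * Y * R) *\<^sub>v v)" .
qed

lemma ln_det_mult_le_mtrace:
  assumes S: "pd_mat n S" and Y: "pd_mat n Y"
  shows "ln (det S) + ln (det Y) \<le> mtrace (S * Y) - n"
    and "ln (det S) + ln (det Y) = mtrace (S * Y) - n \<Longrightarrow> S * Y * S = S"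
proof -
  obtain R where R: "R \<in> carrier_mat n n" "det R \<noteq> 0" "R * R\<^sup>T = S"
    using pd_mat_factor[OF S] .
  have Yc: "Y \<in> carrier_mat n n" using pd_mat_carrier[OF Y] .
  define M where "M = R\<^sup>T * Y * R"
  have M: "pd_mat n M" unfolding M_def by (rule pd_mat_congruence[OF Y R(1,2)])
  have "det M = det S * det Y"
    using R Yc unfolding M_def
    by (simp add: det_mult[of _ n] det_transpose[of R n] flip: R(3))
  then have lnM: "ln (det M) = ln (det S) + ln (det Y)"
    using pd_mat_det_pos[OF S] pd_mat_det_pos[OF Y] by (simp add: ln_mult)
  have "mtrace M = mtrace (R * (R\<^sup>T * Y))"
    unfolding M_def using R(1) Yc by (intro mtrace_mult_commute) auto
  also have "R * (R\<^sup>T * Y) = S * Y"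
    unfolding R(3)[symmetric] using R(1) Yc by (simp add: assoc_mult_mat[of R n n _ n _ n])
  finally have trM: "mtrace M = mtrace (S * Y)" .
  show "ln (det S) + ln (det Y) \<le> mtrace (S * Y) - n"
    using ln_det_le_mtrace(1)[OF M] lnM trM by simp
  assume "ln (det S) + ln (det Y) = mtrace (S * Y) - n"
  then have "M = 1\<^sub>m n" using ln_det_le_mtrace(2)[OF M] lnM trM by simp
  then have "R * M * R\<^sup>T = S" using R by simp
  moreover have "R * M * R\<^sup>T = (R * R\<^sup>T) * Y * (R * R\<^sup>T)"
    unfolding M_def using R(1) Yc by (simp add: assoc_mult_mat[of _ n n _ n _ n])
  ultimately show "S * Y * S = S" unfolding R(3) by simp
qed

lemma mtrace_mult_cong_support:
  assumes S: "S \<in> carrier_mat n n" and Y: "Y \<in> carrier_mat n n" and W: "W \<in> carrier_mat n n"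
    and agree: "\<And>a b. a < n \<Longrightarrow> b < n \<Longrightarrow> S $$ (a,b) \<noteq> 0 \<Longrightarrow> Y $$ (b,a) = W $$ (b,a)"
  shows "mtrace (S * Y) = mtrace (S * W)"
  unfolding mtrace_mult_sum[OF S Y] mtrace_mult_sum[OF S W]
proof (intro sum.cong refl)
  fix a k assume "a \<in> {..<n}" "k \<in> {..<n}"
  then show "S $$ (a,k) * Y $$ (k,a) = S $$ (a,k) * W $$ (k,a)"
    using agree[of a k] by (cases "S $$ (a,k) = 0") auto
qed

lemma unique_maxdet_completion_inverse:
  assumes S: "pd_mat n S" and SW: "S * W = 1\<^sub>m n" "W * S = 1\<^sub>m n" and W: "pd_mat n W"
    and WC: "\<forall>(a,b)\<in>E. W $$ (a,b) = C $$ (a,b)"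
    and supp: "\<And>a b. a < n \<Longrightarrow> b < n \<Longrightarrow> S $$ (a,b) \<noteq> 0 \<Longrightarrow> (b,a) \<in> E"
  shows "unique_maxdet_completion n E C W"
  unfolding unique_maxdet_completion_def
proof (intro conjI allI impI)
  show "maxdet_feasible n E C W" unfolding maxdet_feasible_def using W WC by blast
  fix Y assume "maxdet_feasible n E C Y" "Y \<noteq> W"
  then have Y: "pd_mat n Y" and YC: "\<forall>(a,b)\<in>E. Y $$ (a,b) = C $$ (a,b)"
    unfolding maxdet_feasible_def by auto
  have Sc: "S \<in> carrier_mat n n" and Wc: "W \<in> carrier_mat n n" and Yc: "Y \<in> carrier_mat n n"
    using S W Y by (simp_all add: pd_mat_carrier)
  have "mtrace (S * Y) = mtrace (S * W)"
  proof (rule mtrace_mult_cong_support[OF Sc Yc Wc])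
    fix a b assume "a < n" "b < n" "S $$ (a,b) \<noteq> 0"
    then have "(b,a) \<in> E" by (rule supp)
    then show "Y $$ (b,a) = W $$ (b,a)" using WC YC by auto
  qed
  also have "\<dots> = n" unfolding SW(1) by (simp add: mtrace_def)
  finally have tr: "mtrace (S * Y) = n" .
  have "det S * det W = 1" using det_mult[OF Sc Wc] SW(1) by simp
  then have lnW: "ln (det W) = - ln (det S)"
    using pd_mat_det_pos[OF S] pd_mat_det_pos[OF W] ln_mult[of "det S" "det W"] by simp
  show "ln (det Y) < ln (det W)"
  proof (rule ccontr)
    assume "\<not> ln (det Y) < ln (det W)"
    then have "ln (det S) + ln (det Y) = mtrace (S * Y) - n"
      using ln_det_mult_le_mtrace(1)[OF S Y] tr lnW by linarith
    then have "S * Y * S = S" by (rule ln_det_mult_le_mtrace(2)[OF S Y])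
    then have "W * (S * Y * S) * W = W * S * W" by (rule arg_cong[where f = "\<lambda>X. W * X * W"])
    moreover have "W * (S * Y * S) * W = (W * S) * Y * (S * W)"
      using Sc Wc Yc by (simp add: assoc_mult_mat[of _ n n _ n _ n])
    ultimately have "Y = W" using SW Yc Wc by simp
    with \<open>Y \<noteq> W\<close> show False ..
  qed
qed

section \<open>First-order optimality of the Graphical Lasso\<close>

definition sym_unit :: "nat \<Rightarrow> nat \<Rightarrow> nat \<Rightarrow> real mat" where
  "sym_unit n i j = mat n n (\<lambda>(a,b). if a = i \<and> b = j \<or> a = j \<and> b = i then 1 else 0)"

lemma sym_unit_carrier[simp]: "sym_unit n i j \<in> carrier_mat n n"
  unfolding sym_unit_def by simp

lemma sym_unit_dim[simp]: "dim_row (sym_unit n i j) = n" "dim_col (sym_unit n i j) = n"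
  unfolding sym_unit_def by simp_all

lemma index_sym_update:
  assumes "S \<in> carrier_mat n n" "a < n" "b < n"
  shows "(S + t \<cdot>\<^sub>m sym_unit n i j) $$ (a,b) = S $$ (a,b) + t * sym_unit n i j $$ (a,b)"
  using assms unfolding sym_unit_def by simp

lemma sym_unit_index:
  "a < n \<Longrightarrow> b < n \<Longrightarrow> sym_unit n i j $$ (a,b) = (if a = i \<and> b = j \<or> a = j \<and> b = i then 1 else 0)"
  unfolding sym_unit_def by simp

lemma sym_unit_swap: "a < n \<Longrightarrow> b < n \<Longrightarrow> sym_unit n i j $$ (b,a) = sym_unit n i j $$ (a,b)"
  by (auto simp: sym_unit_index)

lemma sum_sum_delta:
  fixes g :: "nat \<Rightarrow> nat \<Rightarrow> 'a::comm_monoid_add"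
  assumes "i < n" "j < n"
  shows "(\<Sum>a<n. \<Sum>b<n. if a = i \<and> b = j then g a b else 0) = g i j"
proof -
  have "(\<Sum>b<n. if a = i \<and> b = j then g a b else 0) = (if a = i then g a j else 0)" for a
    using assms by (cases "a = i") auto
  then show ?thesis using assms by simp
qed

lemma sum_sum_sym_unit:
  assumes "i < n" "j < n"
  shows "(\<Sum>a<n. \<Sum>b<n. f a b * sym_unit n i j $$ (a,b)) = (if i = j then f i i else f i j + f j i)"
proof (cases "i = j")
  case True
  then have "f a b * sym_unit n i j $$ (a,b) = (if a = i \<and> b = i then f a b else 0)"
    if "a < n" "b < n" for a b
    using that by (simp add: sym_unit_index)
  then show ?thesis using True sum_sum_delta[OF assms(1,1), of f] by simp
next
  case False
  then have "f a b * sym_unit n i j $$ (a,b)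
      = (if a = i \<and> b = j then f a b else 0) + (if a = j \<and> b = i then f a b else 0)"
    if "a < n" "b < n" for a b
    using that by (auto simp: sym_unit_index)
  then have "(\<Sum>a<n. \<Sum>b<n. f a b * sym_unit n i j $$ (a,b))
      = (\<Sum>a<n. \<Sum>b<n. if a = i \<and> b = j then f a b else 0)
        + (\<Sum>a<n. \<Sum>b<n. if a = j \<and> b = i then f a b else 0)"
    by (simp add: sum.distrib)
  then show ?thesis using False sum_sum_delta[OF assms, of f] sum_sum_delta[OF assms(2,1), of f] by simp
qed

lemma quadratic_form_sym_update:
  assumes S: "S \<in> carrier_mat n n" and v: "v \<in> carrier_vec n" and ij: "i < n" "j < n"
  shows "v \<bullet> ((S + t \<cdot>\<^sub>m sym_unit n i j) *\<^sub>v v)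
    = v \<bullet> (S *\<^sub>v v) + t * (if i = j then (v $ i)\<^sup>2 else 2 * (v $ i * v $ j))"
proof -
  have "v \<bullet> ((S + t \<cdot>\<^sub>m sym_unit n i j) *\<^sub>v v)
      = (\<Sum>a<n. \<Sum>b<n. v $ a * (S $$ (a,b) + t * sym_unit n i j $$ (a,b)) * v $ b)"
    using quadratic_form_sum[of "S + t \<cdot>\<^sub>m sym_unit n i j" n v] S v by (simp add: index_sym_update)
  also have "\<dots> = (\<Sum>a<n. \<Sum>b<n. v $ a * S $$ (a,b) * v $ b)
      + t * (\<Sum>a<n. \<Sum>b<n. (v $ a * v $ b) * sym_unit n i j $$ (a,b))"
    by (simp add: algebra_simps sum.distrib sum_distrib_left)
  finally show ?thesis
    unfolding sum_sum_sym_unit[OF ij] quadratic_form_sum[OF S v] by (simp add: power2_eq_square)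
qed

lemma mtrace_mult_sym_update:
  assumes A: "A \<in> carrier_mat n n" and S: "S \<in> carrier_mat n n" and ij: "i < n" "j < n"
  shows "mtrace (A * (S + t \<cdot>\<^sub>m sym_unit n i j))
    = mtrace (A * S) + t * (if i = j then A $$ (i,i) else A $$ (i,j) + A $$ (j,i))"
proof -
  have "mtrace (A * (S + t \<cdot>\<^sub>m sym_unit n i j))
      = (\<Sum>a<n. \<Sum>k<n. A $$ (a,k) * (S $$ (k,a) + t * sym_unit n i j $$ (k,a)))"
    using mtrace_mult_sum[OF A, of "S + t \<cdot>\<^sub>m sym_unit n i j"] S by (simp add: index_sym_update)
  also have "\<dots> = (\<Sum>a<n. \<Sum>k<n. A $$ (a,k) * (S $$ (k,a) + t * sym_unit n i j $$ (a,k)))"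
  proof (intro sum.cong refl)
    fix a k assume "a \<in> {..<n}" "k \<in> {..<n}"
    then show "A $$ (a,k) * (S $$ (k,a) + t * sym_unit n i j $$ (k,a))
      = A $$ (a,k) * (S $$ (k,a) + t * sym_unit n i j $$ (a,k))"
      using sym_unit_swap[of a n k i j] by simp
  qed
  also have "\<dots> = mtrace (A * S) + t * (\<Sum>a<n. \<Sum>k<n. A $$ (a,k) * sym_unit n i j $$ (a,k))"
    unfolding mtrace_mult_sum[OF A S] by (simp add: algebra_simps sum.distrib sum_distrib_left)
  finally show ?thesis unfolding sum_sum_sym_unit[OF ij] .
qed

definition offdiag_l1 :: "nat \<Rightarrow> real mat \<Rightarrow> real" where
  "offdiag_l1 n S = (\<Sum>i<n. \<Sum>j<n. if i \<noteq> j then \<bar>S $$ (i,j)\<bar> else 0)"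

lemma glasso_obj_offdiag_l1:
  "glasso_obj n \<Sigma> lam S = - ln (det S) + mtrace (\<Sigma> * S) + lam * offdiag_l1 n S"
  unfolding glasso_obj_def offdiag_l1_def ..

lemma offdiag_l1_diag_update:
  assumes "S \<in> carrier_mat n n"
  shows "offdiag_l1 n (S + t \<cdot>\<^sub>m sym_unit n i i) = offdiag_l1 n S"
  unfolding offdiag_l1_def using assms
  by (intro sum.cong refl) (auto simp: index_sym_update sym_unit_index)

lemma abs_add_small: "\<bar>t\<bar> < \<bar>s\<bar> \<Longrightarrow> \<bar>s + t\<bar> - \<bar>s\<bar> = t * sgn (s::real)"
  by (cases "s > 0") (auto simp: sgn_if abs_if)

lemma offdiag_l1_sym_update:
  assumes S: "S \<in> carrier_mat n n" and ij: "i < n" "j < n" "i \<noteq> j"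
    and sym: "S $$ (j,i) = S $$ (i,j)" and t: "\<bar>t\<bar> < \<bar>S $$ (i,j)\<bar>"
  shows "offdiag_l1 n (S + t \<cdot>\<^sub>m sym_unit n i j) = offdiag_l1 n S + 2 * t * sgn (S $$ (i,j))"
proof -
  define c where "c = t * sgn (S $$ (i,j))"
  have "(if a \<noteq> b then \<bar>(S + t \<cdot>\<^sub>m sym_unit n i j) $$ (a,b)\<bar> else 0)
      = (if a \<noteq> b then \<bar>S $$ (a,b)\<bar> else 0) + c * sym_unit n i j $$ (a,b)"
    if "a < n" "b < n" for a b
    using that S ij sym abs_add_small[OF t] by (auto simp: index_sym_update sym_unit_index c_def)
  then have "offdiag_l1 n (S + t \<cdot>\<^sub>m sym_unit n i j)
      = offdiag_l1 n S + (\<Sum>a<n. \<Sum>b<n. c * sym_unit n i j $$ (a,b))"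
    unfolding offdiag_l1_def by (simp add: sum.distrib)
  then show ?thesis using sum_sum_sym_unit[OF ij(1,2), of "\<lambda>_ _. c"] ij(3) by (simp add: c_def)
qed

lemma det_row_update:
  assumes A: "A \<in> carrier_mat n n" and B: "B \<in> carrier_mat n n" and r: "r < n"
    and same: "\<And>a b. a < n \<Longrightarrow> b < n \<Longrightarrow> a \<noteq> r \<Longrightarrow> A $$ (a,b) = B $$ (a,b)"
  shows "det A = det B + (\<Sum>k<n. (A $$ (r,k) - B $$ (r,k)) * cofactor B r k)"
proof -
  have "mat_delete A r k = mat_delete B r k" for k
    by (rule eq_matI) (use A B same in \<open>auto simp: mat_delete_def\<close>)
  then have "det A = (\<Sum>k<n. A $$ (r,k) * cofactor B r k)"
    using laplace_expansion_row[OF A r] unfolding cofactor_def by simp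
  also have "\<dots> = (\<Sum>k<n. B $$ (r,k) * cofactor B r k) + (\<Sum>k<n. (A $$ (r,k) - B $$ (r,k)) * cofactor B r k)"
    by (simp add: sum.distrib[symmetric] algebra_simps)
  also have "(\<Sum>k<n. B $$ (r,k) * cofactor B r k) = det B"
    using laplace_expansion_row[OF B r] by simp
  finally show ?thesis .
qed

lemma isCont_det:
  fixes M :: "real \<Rightarrow> real mat"
  assumes M: "\<And>t. M t \<in> carrier_mat n n"
    and cont: "\<And>a b. a < n \<Longrightarrow> b < n \<Longrightarrow> isCont (\<lambda>t. M t $$ (a,b)) x"
  shows "isCont (\<lambda>t. det (M t)) x"
proof -
  have "(\<lambda>t. det (M t)) = (\<lambda>t. \<Sum>p \<in> {p. p permutes {0..<n}}. signof p * (\<Prod>i=0..<n. M t $$ (i, p i)))"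
    using det_def'[OF M] by (intro ext) simp
  moreover have "isCont (\<lambda>t. \<Prod>i=0..<n. M t $$ (i, p i)) x" if "p permutes {0..<n}" for p
    using that cont by (intro continuous_prod) (auto dest: permutes_in_image)
  ultimately show ?thesis by (auto intro!: continuous_intros)
qed

lemma cofactor_eq_det_mult_inverse:
  assumes S: "S \<in> carrier_mat n n" and SW: "S * W = 1\<^sub>m n" and W: "W \<in> carrier_mat n n"
    and ij: "i < n" "j < n"
  shows "cofactor S i j = det S * W $$ (j,i)"
proof -
  have adj: "adj_mat S \<in> carrier_mat n n" "adj_mat S * S = det S \<cdot>\<^sub>m 1\<^sub>m n" using adj_mat[OF S] by auto
  have "adj_mat S = adj_mat S * (S * W)" using SW adj by simp
  also have "\<dots> = det S \<cdot>\<^sub>m W"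
    using adj S W mult_smult_assoc_mat[of "1\<^sub>m n" n n W n "det S"]
    by (simp flip: assoc_mult_mat[of _ n n _ n _ n])
  finally have "adj_mat S $$ (j,i) = (det S \<cdot>\<^sub>m W) $$ (j,i)" by simp
  then show ?thesis using S W ij unfolding adj_mat_def by simp
qed

lemma det_entry_update:
  assumes A: "A \<in> carrier_mat n n" and B: "B \<in> carrier_mat n n" and ij: "i < n" "j < n"
    and B_index: "\<And>a b. a < n \<Longrightarrow> b < n \<Longrightarrow> B $$ (a,b) = A $$ (a,b) + (if a = i \<and> b = j then t else 0)"
  shows "det B = det A + t * cofactor A i j"
proof -
  have "det B = det A + (\<Sum>k<n. (B $$ (i,k) - A $$ (i,k)) * cofactor A i k)"
    by (rule det_row_update[OF B A ij(1)]) (simp add: B_index)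
  also have "(\<Sum>k<n. (B $$ (i,k) - A $$ (i,k)) * cofactor A i k) = (\<Sum>k<n. if k = j then t * cofactor A i j else 0)"
    by (intro sum.cong refl) (use ij in \<open>auto simp: B_index\<close>)
  finally show ?thesis using ij by simp
qed

text \<open>A symmetric update changes at most two entries, each of which contributes its cofactor
  to first order.\<close>

lemma det_sym_update:
  assumes S: "S \<in> carrier_mat n n" and ij: "i < n" "j < n"
  obtains g where "isCont g 0" "g 0 = (if i = j then cofactor S i i else cofactor S i j + cofactor S j i)"
    "\<And>t. det (S + t \<cdot>\<^sub>m sym_unit n i j) = det S + t * g t"
proof (cases "i = j")
  case True
  have "det (S + t \<cdot>\<^sub>m sym_unit n i j) = det S + t * cofactor S i i" for t
    by (rule det_entry_update[OF S _ ij(1,1)]) (use S True in \<open>auto simp: index_sym_update sym_unit_index\<close>)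
  then show ?thesis using that[of "\<lambda>_. cofactor S i i"] True by simp
next
  case False
  define S1 where "S1 t = mat n n (\<lambda>(a,b). S $$ (a,b) + t * (if a = i \<and> b = j then 1 else 0))" for t
  have S1: "S1 t \<in> carrier_mat n n" for t unfolding S1_def by simp
  have "det (S + t \<cdot>\<^sub>m sym_unit n i j) = det (S1 t) + t * cofactor (S1 t) j i" for t
    by (rule det_entry_update[OF S1 _ ij(2,1)]) (use S False in \<open>auto simp: S1_def index_sym_update sym_unit_index\<close>)
  moreover have "det (S1 t) = det S + t * cofactor S i j" for t
    by (rule det_entry_update[OF S S1 ij]) (simp add: S1_def)
  moreover have "isCont (\<lambda>t. det (mat_delete (S1 t) j i)) 0"
  proof (rule isCont_det)
    show "mat_delete (S1 t) j i \<in> carrier_mat (n - 1) (n - 1)" for t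
      using mat_delete_carrier[OF S1] by simp
    show "isCont (\<lambda>t. mat_delete (S1 t) j i $$ (a,b)) 0" if "a < n - 1" "b < n - 1" for a b
      using that by (simp add: mat_delete_def S1_def continuous_intros)
  qed
  then have "isCont (\<lambda>t. cofactor S i j + cofactor (S1 t) j i) 0"
    unfolding cofactor_def by (intro continuous_intros)
  moreover have "S1 0 = S" by (rule eq_matI) (use S in \<open>auto simp: S1_def\<close>)
  ultimately show ?thesis
    using that[of "\<lambda>t. cofactor S i j + cofactor (S1 t) j i"] False by (simp add: algebra_simps)
qed

text \<open>Cauchy-Schwarz for the inner product \<open>\<langle>x,y\<rangle> = x\<^sup>T S y\<close>, applied to \<open>v\<close> and the \<open>k\<close>-th
  column \<open>w\<close> of \<open>W = S\<^sup>-\<^sup>1\<close>, for which \<open>\<langle>v,w\<rangle> = v\<^sub>k\<close> and \<open>\<langle>w,w\<rangle> = W\<^sub>k\<^sub>k\<close>.\<close>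

lemma sq_index_le_inverse_diag:
  assumes S: "pd_mat n S" and SW: "S * W = 1\<^sub>m n" and W: "pd_mat n W"
    and k: "k < n" and v: "v \<in> carrier_vec n"
  shows "(v $ k)\<^sup>2 \<le> W $$ (k,k) * (v \<bullet> (S *\<^sub>v v))"
proof -
  have Sc: "S \<in> carrier_mat n n" and Wc: "W \<in> carrier_mat n n"
    using S W by (simp_all add: pd_mat_carrier)
  define Q where "Q x y = (\<Sum>a<n. \<Sum>b<n. x a * S $$ (a,b) * y b)" for x y
  define w where "w a = W $$ (a,k)" for a
  have Q_sym: "Q x y = Q y x" for x y
    unfolding Q_def using pd_mat_index_sym[OF S]
    by (subst sum.swap) (intro sum.cong refl, simp add: mult_ac)
  have Q_w: "Q x w = x k" for x
  proof -
    have "(\<Sum>b<n. S $$ (a,b) * w b) = (if a = k then 1 else 0)" if "a < n" for a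
      using index_mult_mat_sum[OF Sc Wc that k] SW that k unfolding w_def by simp
    then have "(\<Sum>a<n. x a * (\<Sum>b<n. S $$ (a,b) * w b)) = (\<Sum>a<n. if a = k then x a else 0)"
      by (intro sum.cong refl) simp
    then show ?thesis using k unfolding Q_def by (simp add: sum_distrib_left mult.assoc)
  qed
  have Q_expand: "Q (\<lambda>a. x a - \<mu> * y a) (\<lambda>a. x a - \<mu> * y a) = Q x x - 2 * \<mu> * Q x y + \<mu>\<^sup>2 * Q y y"
    for x y \<mu>
  proof -
    have "Q (\<lambda>a. x a - \<mu> * y a) (\<lambda>a. x a - \<mu> * y a) = Q x x - \<mu> * Q x y - \<mu> * Q y x + \<mu>\<^sup>2 * Q y y"
      unfolding Q_def
      by (simp add: algebra_simps power2_eq_square sum.distrib sum_subtractf sum_distrib_left)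
    then show ?thesis using Q_sym[of y x] by simp
  qed
  have Wkk: "0 < W $$ (k,k)" by (rule pd_mat_diag_pos[OF W k])
  define \<mu> where "\<mu> = v $ k / W $$ (k,k)"
  have "0 \<le> Q (\<lambda>a. v $ a - \<mu> * w a) (\<lambda>a. v $ a - \<mu> * w a)"
    unfolding Q_def by (rule pd_form_nonneg[OF pd_mat_pd_form[OF S]])
  also have "\<dots> = Q (\<lambda>a. v $ a) (\<lambda>a. v $ a) - (v $ k)\<^sup>2 / W $$ (k,k)"
    unfolding Q_expand Q_w using Wkk by (simp add: w_def \<mu>_def field_simps power2_eq_square)
  finally show ?thesis
    using Wkk quadratic_form_sum[OF Sc v] unfolding Q_def by (simp add: field_simps)
qed

lemma sym_mat_sym_update:
  assumes "sym_mat n S"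
  shows "sym_mat n (S + t \<cdot>\<^sub>m sym_unit n i j)"
proof -
  have S: "S \<in> carrier_mat n n" using assms unfolding sym_mat_def by simp
  have "(S + t \<cdot>\<^sub>m sym_unit n i j)\<^sup>T = S + t \<cdot>\<^sub>m sym_unit n i j"
    by (rule eq_matI)
      (use S sym_mat_index[OF assms] sym_unit_swap in \<open>auto simp: index_sym_update\<close>)
  then show ?thesis using S unfolding sym_mat_def by simp
qed

lemma pd_mat_sym_update:
  assumes S: "pd_mat n S" and SW: "S * W = 1\<^sub>m n" and W: "pd_mat n W" and ij: "i < n" "j < n"
    and t: "\<bar>t\<bar> * (W $$ (i,i) + W $$ (j,j)) < 1"
  shows "pd_mat n (S + t \<cdot>\<^sub>m sym_unit n i j)"
  unfolding pd_mat_def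
proof (intro conjI sym_mat_sym_update ballI impI)
  show "sym_mat n S" using pd_mat_sym[OF S] .
  fix v :: "real vec" assume v: "v \<in> carrier_vec n" "v \<noteq> 0\<^sub>v n"
  define Q where "Q = v \<bullet> (S *\<^sub>v v)"
  define X where "X = (if i = j then (v $ i)\<^sup>2 else 2 * (v $ i * v $ j))"
  have Q: "0 < Q" unfolding Q_def using S v unfolding pd_mat_def by auto
  have "\<bar>X\<bar> \<le> (v $ i)\<^sup>2 + (v $ j)\<^sup>2"
    unfolding X_def using sum_squares_bound[of "\<bar>v $ i\<bar>" "\<bar>v $ j\<bar>"] by (auto simp: abs_mult)
  also have "\<dots> \<le> (W $$ (i,i) + W $$ (j,j)) * Q"
    using sq_index_le_inverse_diag[OF S SW W _ v(1)] ij unfolding Q_def by (simp add: algebra_simps add_mono)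
  finally have "\<bar>t * X\<bar> \<le> (\<bar>t\<bar> * (W $$ (i,i) + W $$ (j,j))) * Q"
    by (simp add: abs_mult mult_left_mono mult.assoc)
  also have "\<dots> < Q" using t Q by simp
  finally have "\<bar>t * X\<bar> < Q" .
  then show "0 < v \<bullet> ((S + t \<cdot>\<^sub>m sym_unit n i j) *\<^sub>v v)"
    using quadratic_form_sym_update[OF pd_mat_carrier[OF S] v(1) ij, of t] unfolding Q_def X_def by linarith
qed

lemma ln_det_sym_update_has_derivative:
  assumes S: "pd_mat n S" and SW: "S * W = 1\<^sub>m n" and W: "pd_mat n W" and ij: "i < n" "j < n"
  shows "((\<lambda>t. ln (det (S + t \<cdot>\<^sub>m sym_unit n i j))) has_real_derivative
           (if i = j then W $$ (i,i) else 2 * W $$ (i,j))) (at 0)"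
proof -
  have Sc: "S \<in> carrier_mat n n" using pd_mat_carrier[OF S] .
  obtain g where g: "isCont g 0" "g 0 = (if i = j then cofactor S i i else cofactor S i j + cofactor S j i)"
    "\<And>t. det (S + t \<cdot>\<^sub>m sym_unit n i j) = det S + t * g t"
    using det_sym_update[OF Sc ij] by blast
  have g0: "g 0 = det S * (if i = j then W $$ (i,i) else 2 * W $$ (i,j))"
    unfolding g(2) using cofactor_eq_det_mult_inverse[OF Sc SW pd_mat_carrier[OF W]] ij
      pd_mat_index_sym[OF W ij(2,1)] by auto
  have "(ln has_real_derivative 1 / det S) (at (det S + 0 * g 0))"
    using DERIV_ln_divide[OF pd_mat_det_pos[OF S]] by simp
  moreover have "((\<lambda>t. det S + t * g t) has_real_derivative g 0) (at 0)"
    unfolding CARAT_DERIV using g(1) by (intro exI[of _ g]) simp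
  ultimately have "((\<lambda>t. ln (det S + t * g t)) has_real_derivative (1 / det S * g 0)) (at 0)"
    by (rule DERIV_chain2[of ln _ "\<lambda>t. det S + t * g t"])
  then show ?thesis using g0 pd_mat_det_pos[OF S] unfolding g(3) by simp
qed

lemma glasso_obj_sym_update:
  assumes S: "sym_mat n S" and \<Sigma>: "sym_mat n \<Sigma>" and ij: "i < n" "j < n"
    and t: "i \<noteq> j \<Longrightarrow> \<bar>t\<bar> < \<bar>S $$ (i,j)\<bar>"
  shows "glasso_obj n \<Sigma> lam (S + t \<cdot>\<^sub>m sym_unit n i j)
    = glasso_obj n \<Sigma> lam S + ln (det S) - ln (det (S + t \<cdot>\<^sub>m sym_unit n i j))
      + t * (if i = j then \<Sigma> $$ (i,i) else 2 * (\<Sigma> $$ (i,j) + lam * sgn (S $$ (i,j))))"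
proof -
  have Sc: "S \<in> carrier_mat n n" and \<Sigma>c: "\<Sigma> \<in> carrier_mat n n"
    using S \<Sigma> unfolding sym_mat_def by simp_all
  have "offdiag_l1 n (S + t \<cdot>\<^sub>m sym_unit n i j)
      = offdiag_l1 n S + (if i = j then 0 else 2 * t * sgn (S $$ (i,j)))"
    using t offdiag_l1_diag_update[OF Sc] offdiag_l1_sym_update[OF Sc ij _ sym_mat_index[OF S ij(2,1)]]
    by auto
  then show ?thesis
    unfolding glasso_obj_offdiag_l1 mtrace_mult_sym_update[OF \<Sigma>c Sc ij]
    using sym_mat_index[OF \<Sigma> ij] by (auto simp: algebra_simps)
qed

text \<open>Along \<open>S + t E\<^sub>i\<^sub>j\<close> the penalty is differentiable at \<open>t = 0\<close> because \<open>S\<^sub>i\<^sub>j \<noteq> 0\<close>, so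
  the derivative of the objective vanishes there.\<close>

lemma glasso_opt_stationary:
  assumes opt: "glasso_opt n \<Sigma> lam S" and \<Sigma>: "sym_mat n \<Sigma>"
    and SW: "S * W = 1\<^sub>m n" and W: "pd_mat n W"
    and ij: "i < n" "j < n" and nz: "i \<noteq> j \<Longrightarrow> S $$ (i,j) \<noteq> 0"
  shows "if i = j then W $$ (i,i) = \<Sigma> $$ (i,i) else W $$ (i,j) = \<Sigma> $$ (i,j) + lam * sgn (S $$ (i,j))"
proof -
  have S: "pd_mat n S" using opt unfolding glasso_opt_def by simp
  define w where "w = (if i = j then W $$ (i,i) else 2 * W $$ (i,j))"
  define c where "c = (if i = j then \<Sigma> $$ (i,i) else 2 * (\<Sigma> $$ (i,j) + lam * sgn (S $$ (i,j))))"
  define F where "F t = glasso_obj n \<Sigma> lam S + ln (det S) - ln (det (S + t \<cdot>\<^sub>m sym_unit n i j)) + t * c" for t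
  define \<delta> where "\<delta> = min (1 / (W $$ (i,i) + W $$ (j,j))) (if i = j then 1 else \<bar>S $$ (i,j)\<bar>)"
  have Wii: "0 < W $$ (i,i)" and Wjj: "0 < W $$ (j,j)" using pd_mat_diag_pos[OF W] ij by auto
  have \<delta>: "0 < \<delta>" unfolding \<delta>_def using Wii Wjj nz by auto
  have "F 0 \<le> F t" if t: "\<bar>0 - t\<bar> < \<delta>" for t
  proof -
    have "\<bar>t\<bar> * (W $$ (i,i) + W $$ (j,j)) < 1"
      using t Wii Wjj unfolding \<delta>_def by (simp add: field_simps)
    then have "glasso_obj n \<Sigma> lam S \<le> glasso_obj n \<Sigma> lam (S + t \<cdot>\<^sub>m sym_unit n i j)"
      using opt pd_mat_sym_update[OF S SW W ij] unfolding glasso_opt_def by blast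
    also have "\<dots> = F t"
      unfolding F_def c_def
      by (rule glasso_obj_sym_update[OF pd_mat_sym[OF S] \<Sigma> ij]) (use t in \<open>auto simp: \<delta>_def\<close>)
    moreover have "S + 0 \<cdot>\<^sub>m sym_unit n i j = S" using pd_mat_carrier[OF S] by (intro eq_matI) auto
    ultimately show ?thesis by (simp add: F_def)
  qed
  moreover have "(F has_real_derivative (- w + c)) (at 0)"
    unfolding F_def[abs_def] w_def
    by (rule derivative_eq_intros ln_det_sym_update_has_derivative[OF S SW W ij] refl | simp)+
  ultimately have "w = c" using DERIV_local_min[of F "- w + c" 0 \<delta>] \<delta> by simp
  then show ?thesis unfolding w_def c_def by (cases "i = j") auto
qed

lemma pd_form_two_coords:
  assumes A: "pd_form n A" and ab: "a < n" "b < n" "a \<noteq> b" and x: "x \<noteq> 0"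
  shows "0 < x\<^sup>2 * A a a + 2 * x * y * A a b + y\<^sup>2 * A b b"
proof -
  define v where "v c = (if c = a then x else 0) + (if c = b then y else 0)" for c
  have "0 < (\<Sum>c<n. \<Sum>d<n. v c * A c d * v d)"
    by (rule pd_form_pos[OF A]) (use ab x in \<open>auto simp: v_def\<close>)
  also have "\<dots> = x\<^sup>2 * A a a + x * y * A a b + y * x * A b a + y\<^sup>2 * A b b"
    unfolding v_def using ab
    by (simp add: algebra_simps sum.distrib if_distrib[of "\<lambda>z. z * _"] if_distrib[of "\<lambda>z. _ * z"]
        power2_eq_square if_if_eq_conj sum_sum_delta cong: if_cong)
  finally show ?thesis using A ab unfolding pd_form_def by (simp add: algebra_simps)
qed

lemma pd_mat_unit_diag_offdiag_lt1:
  assumes W: "pd_mat n W" and ab: "a < n" "b < n" "a \<noteq> b"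
    and unit: "W $$ (a,a) = 1" "W $$ (b,b) = 1"
  shows "\<bar>W $$ (a,b)\<bar> < 1"
proof -
  have "0 < 1 - (W $$ (a,b))\<^sup>2"
    using pd_form_two_coords[OF pd_mat_pd_form[OF W] ab, of 1 "- W $$ (a,b)"] unit
    by (simp add: power2_eq_square)
  then show ?thesis by (simp add: abs_square_less_1)
qed

text \<open>This is the only place where \<open>\<lambda> \<ge> 1/2\<close> is needed: if \<open>x\<close> and \<open>s\<close> had the same sign,
  then \<open>\<bar>s + \<lambda> sgn x\<bar> = \<bar>s\<bar> + \<lambda> > 2\<lambda> \<ge> 1\<close>.\<close>

lemma sgn_opposite_if_bounded:
  assumes "\<bar>s\<bar> > lam" "lam \<ge> 1/2" "x \<noteq> 0" "\<bar>s + lam * sgn x\<bar> < (1::real)"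
  shows "s + lam * sgn x = s - lam * sgn s"
  using assms by (cases "x > 0"; cases "s > 0") (auto simp: sgn_if abs_if split: if_splits)

lemma glasso_inverse_completes:
  assumes sc: "sample_corr n \<Sigma>" and opt: "glasso_opt n \<Sigma> lam S"
    and supp: "\<forall>i<n. \<forall>j<n. i \<noteq> j \<longrightarrow> (S $$ (i,j) \<noteq> 0 \<longleftrightarrow> \<bar>\<Sigma> $$ (i,j)\<bar> > lam)"
    and lam: "lam \<ge> 1/2" and SW: "S * W = 1\<^sub>m n" and W: "pd_mat n W"
  shows "\<forall>(a,b) \<in> pattern n \<Sigma> lam. W $$ (a,b) = Cpart n \<Sigma> lam $$ (a,b)"
proof -
  have \<Sigma>: "sym_mat n \<Sigma>" using sc unfolding sample_corr_def psd_mat_def by simp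
  have W1: "W $$ (a,a) = 1" if "a < n" for a
    using glasso_opt_stationary[OF opt \<Sigma> SW W that that] sc that unfolding sample_corr_def by simp
  have "W $$ (a,b) = \<Sigma> $$ (a,b) - lam * sgn (\<Sigma> $$ (a,b))" if adj: "thr_adj n \<Sigma> lam a b" for a b
  proof -
    have ab: "a < n" "b < n" "a \<noteq> b" and big: "\<bar>\<Sigma> $$ (a,b)\<bar> > lam"
      using adj unfolding thr_adj_def by auto
    have nz: "S $$ (a,b) \<noteq> 0" using supp ab big by blast
    have "W $$ (a,b) = \<Sigma> $$ (a,b) + lam * sgn (S $$ (a,b))"
      using glasso_opt_stationary[OF opt \<Sigma> SW W ab(1,2)] nz ab(3) by simp
    moreover have "\<bar>W $$ (a,b)\<bar> < 1" using pd_mat_unit_diag_offdiag_lt1[OF W ab] W1 ab by simp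
    ultimately show ?thesis using sgn_opposite_if_bounded[OF big lam nz] by simp
  qed
  then show ?thesis using W1 unfolding pattern_def Cpart_def thr_adj_def by auto
qed

lemma glasso_inverse_unique_maxdet_completion:
  assumes sc: "sample_corr n \<Sigma>" and opt: "glasso_opt n \<Sigma> lam S"
    and supp: "\<forall>i<n. \<forall>j<n. i \<noteq> j \<longrightarrow> (S $$ (i,j) \<noteq> 0 \<longleftrightarrow> \<bar>\<Sigma> $$ (i,j)\<bar> > lam)"
    and lam: "lam \<ge> 1/2" and SW: "S * W = 1\<^sub>m n" "W * S = 1\<^sub>m n" and W: "pd_mat n W"
  shows "unique_maxdet_completion n (pattern n \<Sigma> lam) (Cpart n \<Sigma> lam) W"
proof (rule unique_maxdet_completion_inverse[OF _ SW W glasso_inverse_completes[OF sc opt supp lam SW(1) W]])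
  show "pd_mat n S" using opt unfolding glasso_opt_def by simp
  have \<Sigma>: "sym_mat n \<Sigma>" using sc unfolding sample_corr_def psd_mat_def by simp
  fix a b assume "a < n" "b < n" "S $$ (a,b) \<noteq> 0"
  then show "(b,a) \<in> pattern n \<Sigma> lam"
    using supp sym_mat_index[OF \<Sigma>] unfolding pattern_def thr_adj_def by (cases "a = b") auto
qed

section \<open>Chordal sparsity and the LDL factors\<close>

lemma card_less_pick_bound:
  fixes I :: "nat set"
  assumes "finite I" "i \<in> I"
  shows "card {a\<in>I. a < i} < card I"
proof (rule psubset_card_mono[OF assms(1)])
  have "i \<notin> {a\<in>I. a < i}" by simp
  then show "{a\<in>I. a < i} \<subset> I" using assms(2) by blast
qed

lemma bij_betw_pick:
  assumes fin: "finite I"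
  shows "bij_betw (pick I) {..<card I} I"
  unfolding bij_betw_def
proof
  show "inj_on (pick I) {..<card I}"
    by (rule strict_mono_on_imp_inj_on) (auto intro: strict_mono_onI pick_mono)
  show "pick I ` {..<card I} = I"
  proof
    show "pick I ` {..<card I} \<subseteq> I" using pick_in_set by auto
    show "I \<subseteq> pick I ` {..<card I}"
    proof
      fix m assume m: "m \<in> I"
      then have "m = pick I (card {a\<in>I. a < m})" by (rule pick_card_in_set[symmetric])
      moreover have "card {a\<in>I. a < m} < card I" by (rule card_less_pick_bound[OF fin m])
      ultimately show "m \<in> pick I ` {..<card I}" by blast
    qed
  qed
qed

lemma sum_pick: "finite I \<Longrightarrow> (\<Sum>q<card I. f (pick I q)) = (\<Sum>m\<in>I. f m)"
  using sum.reindex_bij_betw[OF bij_betw_pick, of I f] by simp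

lemma submatrix_carrier:
  assumes "A \<in> carrier_mat nr nc" "I \<subseteq> {..<nr}" "J \<subseteq> {..<nc}"
  shows "submatrix A I J \<in> carrier_mat (card I) (card J)"
proof (rule carrier_matI)
  have "{i. i < dim_row A \<and> i \<in> I} = I" using assms(1,2) by auto
  then show "dim_row (submatrix A I J) = card I" by (simp only: dim_submatrix)
  have "{j. j < dim_col A \<and> j \<in> J} = J" using assms(1,3) by auto
  then show "dim_col (submatrix A I J) = card J" by (simp only: dim_submatrix)
qed

lemma submatrix_index_pick:
  assumes "A \<in> carrier_mat nr nc" "I \<subseteq> {..<nr}" "J \<subseteq> {..<nc}" "p < card I" "q < card J"
  shows "submatrix A I J $$ (p,q) = A $$ (pick I p, pick J q)"
proof (rule submatrix_index)
  have "card {i. i < dim_row A \<and> i \<in> I} = card I"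
    using carrier_matD(1)[OF submatrix_carrier[OF assms(1-3)]] unfolding dim_submatrix .
  then show "p < card {i. i < dim_row A \<and> i \<in> I}" using assms(4) by simp
  have "card {j. j < dim_col A \<and> j \<in> J} = card J"
    using carrier_matD(2)[OF submatrix_carrier[OF assms(1-3)]] unfolding dim_submatrix .
  then show "q < card {j. j < dim_col A \<and> j \<in> J}" using assms(5) by simp
qed

lemma sum_sum_pick:
  "finite I \<Longrightarrow> (\<Sum>p<card I. \<Sum>q<card I. f (pick I p) (pick I q)) = (\<Sum>a\<in>I. \<Sum>b\<in>I. f a b)"
  using sum_pick[of I "\<lambda>a. \<Sum>b\<in>I. f a b"] by (simp add: sum_pick)

lemma sym_mat_submatrix:
  assumes W: "sym_mat n W" and I: "I \<subseteq> {..<n}"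
  shows "sym_mat (card I) (submatrix W I I)"
proof -
  have Wc: "W \<in> carrier_mat n n" using W unfolding sym_mat_def by simp
  have A: "submatrix W I I \<in> carrier_mat (card I) (card I)" by (rule submatrix_carrier[OF Wc I I])
  have "(submatrix W I I)\<^sup>T = submatrix W I I"
  proof (rule eq_matI)
    fix p q assume "p < dim_row (submatrix W I I)" "q < dim_col (submatrix W I I)"
    then have pq: "p < card I" "q < card I" using A by auto
    then have "pick I p < n" "pick I q < n" using pick_in_set I by blast+
    then show "(submatrix W I I)\<^sup>T $$ (p,q) = submatrix W I I $$ (p,q)"
      using pq A sym_mat_index[OF W] submatrix_index_pick[OF Wc I I] by auto
  qed (use A in auto)
  then show ?thesis using A unfolding sym_mat_def by simp
qed

lemma submatrix_cong:
  assumes A: "A \<in> carrier_mat nr nc" and B: "B \<in> carrier_mat nr nc"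
    and I: "I \<subseteq> {..<nr}" and J: "J \<subseteq> {..<nc}"
    and eq: "\<And>a b. a \<in> I \<Longrightarrow> b \<in> J \<Longrightarrow> A $$ (a,b) = B $$ (a,b)"
  shows "submatrix A I J = submatrix B I J"
proof (rule eq_matI)
  fix p q assume "p < dim_row (submatrix B I J)" "q < dim_col (submatrix B I J)"
  then have pq: "p < card I" "q < card J" using submatrix_carrier[OF B I J] by auto
  then show "submatrix A I J $$ (p,q) = submatrix B I J $$ (p,q)"
    using submatrix_index_pick[OF A I J pq] submatrix_index_pick[OF B I J pq] eq pick_in_set by metis
qed (use submatrix_carrier[OF A I J] submatrix_carrier[OF B I J] in auto)

lemma col_submatrix_singleton:
  assumes C: "C \<in> carrier_mat nr nc" and I: "I \<subseteq> {..<nr}" and j: "j < nc"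
  shows "col (submatrix C I {j}) 0 \<in> carrier_vec (card I)"
    and "p < card I \<Longrightarrow> col (submatrix C I {j}) 0 $ p = C $$ (pick I p, j)"
proof -
  have jI: "{j} \<subseteq> {..<nc}" using j by simp
  have sub: "submatrix C I {j} \<in> carrier_mat (card I) 1" using submatrix_carrier[OF C I jI] by simp
  show "col (submatrix C I {j}) 0 \<in> carrier_vec (card I)" by (rule col_carrier_vec[OF _ sub]) simp
  assume p: "p < card I"
  have "col (submatrix C I {j}) 0 $ p = submatrix C I {j} $$ (p, 0)"
    using carrier_matD[OF sub] p by simp
  also have "\<dots> = C $$ (pick I p, pick {j} 0)" by (rule submatrix_index_pick[OF C I jI p]) simp
  also have "pick {j} 0 = j" by (simp add: Least_equality)
  finally show "col (submatrix C I {j}) 0 $ p = C $$ (pick I p, j)" .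
qed

lemma pd_mat_submatrix:
  assumes W: "pd_mat n W" and I: "I \<subseteq> {..<n}"
  shows "pd_mat (card I) (submatrix W I I)"
proof (rule pd_form_pd_mat[OF sym_mat_submatrix[OF pd_mat_sym[OF W] I]])
  have Wc: "W \<in> carrier_mat n n" using pd_mat_carrier[OF W] .
  have fin: "finite I" using I finite_subset by blast
  show "pd_form (card I) (\<lambda>p q. submatrix W I I $$ (p,q))"
    unfolding pd_form_def
  proof (intro conjI allI impI)
    fix p q assume "p < card I" "q < card I"
    then show "submatrix W I I $$ (p,q) = submatrix W I I $$ (q,p)"
      using sym_mat_submatrix[OF pd_mat_sym[OF W] I] sym_mat_index by blast
  next
    fix x :: "nat \<Rightarrow> real" assume "\<exists>p<card I. x p \<noteq> 0"
    then obtain p where p: "p < card I" "x p \<noteq> 0" by blast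
    define y where "y a = (if a \<in> I then x (card {b\<in>I. b < a}) else 0)" for a
    have y_pick: "y (pick I q) = x q" if "q < card I" for q
      using pick_in_set[of q I] card_pick[of q I] that unfolding y_def by auto
    have "pick I p < n" "y (pick I p) \<noteq> 0" using p y_pick pick_in_set[of p I] I by auto
    then have "0 < (\<Sum>a<n. \<Sum>b<n. y a * W $$ (a,b) * y b)"
      by (intro pd_form_pos[OF pd_mat_pd_form[OF W]]) blast
    also have "\<dots> = (\<Sum>a\<in>I. \<Sum>b<n. y a * W $$ (a,b) * y b)"
      by (rule sum.mono_neutral_right) (use I in \<open>auto simp: y_def\<close>)
    also have "\<dots> = (\<Sum>a\<in>I. \<Sum>b\<in>I. y a * W $$ (a,b) * y b)"
      by (intro sum.cong refl sum.mono_neutral_right) (use I in \<open>auto simp: y_def\<close>)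
    also have "\<dots> = (\<Sum>p<card I. \<Sum>q<card I. x p * submatrix W I I $$ (p,q) * x q)"
      unfolding sum_sum_pick[OF fin, symmetric] using submatrix_index_pick[OF Wc I I]
      by (simp add: y_pick)
    finally show "0 < (\<Sum>p<card I. \<Sum>q<card I. x p * submatrix W I I $$ (p,q) * x q)" .
  qed
qed

text \<open>No fill-in: for a perfect elimination ordering, a nonzero \<open>L\<^sub>i\<^sub>k L\<^sub>j\<^sub>k\<close> with \<open>k < j < i\<close>
  makes \<open>i\<close> and \<open>j\<close> higher neighbours of \<open>k\<close> (by induction), hence adjacent; so the entry
  \<open>S\<^sub>i\<^sub>j = L\<^sub>i\<^sub>j D\<^sub>j + \<Sum>\<^sub>k\<^sub><\<^sub>j L\<^sub>i\<^sub>k D\<^sub>k L\<^sub>j\<^sub>k\<close> of a non-edge reduces to \<open>L\<^sub>i\<^sub>j D\<^sub>j\<close>.\<close>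

lemma LDLT_no_fill:
  assumes L: "unit_lower_triangular n L" and D: "\<forall>k<n. 0 < D k" and S: "S = L * mat_diag n D * L\<^sup>T"
    and peo: "natural_peo n adj"
    and zero: "\<And>a b. a < n \<Longrightarrow> b < n \<Longrightarrow> a \<noteq> b \<Longrightarrow> \<not> adj a b \<Longrightarrow> S $$ (a,b) = 0"
  shows "j < i \<Longrightarrow> i < n \<Longrightarrow> \<not> adj i j \<Longrightarrow> L $$ (i,j) = 0"
proof (induction j arbitrary: i rule: less_induct)
  case (less j i)
  have Lc: "L \<in> carrier_mat n n" and L1: "\<forall>a<n. L $$ (a,a) = 1"
    and L0: "\<forall>a b. a < b \<longrightarrow> b < n \<longrightarrow> L $$ (a,b) = 0"
    using L unfolding unit_lower_triangular_def by auto
  have jn: "j < n" using less.prems by simp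
  have "L $$ (i,k) * D k * L $$ (j,k) = (if k = j then L $$ (i,j) * D j else 0)" if k: "k < n" for k
  proof (cases "k < j")
    case True
    show ?thesis
    proof (rule ccontr)
      assume "\<not> ?thesis"
      then have "L $$ (i,k) \<noteq> 0" "L $$ (j,k) \<noteq> 0" using True by auto
      then have "adj i k" "adj j k" using less.IH[OF True, of i] less.IH[OF True, of j] True less.prems jn
        by auto
      then have "i \<in> higher_nbrs n adj k" "j \<in> higher_nbrs n adj k"
        unfolding higher_nbrs_def using True less.prems jn by auto
      then have "adj i j" using peo k less.prems(1) unfolding natural_peo_def by auto
      then show False using less.prems(3) by simp
    qed
  qed (use L1 L0 jn k in auto)
  then have "S $$ (i,j) = L $$ (i,j) * D j"
    unfolding S LDLT_index[OF Lc less.prems(2) jn] using jn by simp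
  moreover have "D j \<noteq> 0" using D jn by (simp add: less_imp_neq[symmetric])
  ultimately show ?case using zero[OF less.prems(2) jn _ less.prems(3)] less.prems(1) by simp
qed

lemma LDLT_inverse_congruence:
  assumes L: "unit_lower_triangular n L" and D: "\<forall>k<n. 0 < D k" and S: "S = L * mat_diag n D * L\<^sup>T"
    and SW: "S * W = 1\<^sub>m n" and W: "W \<in> carrier_mat n n"
  shows "L\<^sup>T * (W * L) = mat_diag n (\<lambda>k. 1 / D k)"
proof -
  have Lc: "L \<in> carrier_mat n n" using L unfolding unit_lower_triangular_def by simp
  define N where "N = L\<^sup>T * (W * L)"
  have Nc: "N \<in> carrier_mat n n" unfolding N_def using Lc W by simp
  have "L \<in> Units (ring_mat TYPE(real) n ())"
    using det_non_zero_imp_unit[OF Lc] det_unit_lower_triangular[OF L] by simp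
  then obtain Li where "mat_inverse L = Some Li"
    using mat_inverse(1)[OF Lc, where b="()"] by fastforce
  then have Li: "Li * L = 1\<^sub>m n" "Li \<in> carrier_mat n n" using mat_inverse(2)[OF Lc] by auto
  have "L * (mat_diag n D * N) = S * W * L"
    unfolding N_def S using Lc W
    by (simp add: assoc_mult_mat[of _ n n _ n _ n] mult_carrier_mat[of _ n n _ n])
  then have "L * (mat_diag n D * N) = L" using SW Lc by simp
  then have "Li * (L * (mat_diag n D * N)) = Li * L" by simp
  moreover have "Li * (L * (mat_diag n D * N)) = (Li * L) * (mat_diag n D * N)"
    by (rule assoc_mult_mat[symmetric, of Li n n L n _ n])
      (use Li(2) Lc Nc mult_carrier_mat[OF mat_diag_dim Nc] in auto)
  ultimately have DN: "mat_diag n D * N = 1\<^sub>m n"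
    using Li(1) left_mult_one_mat[OF mult_carrier_mat[OF mat_diag_dim Nc]] by simp
  show ?thesis
    unfolding N_def[symmetric]
  proof (rule eq_matI)
    fix a b assume "a < dim_row (mat_diag n (\<lambda>k. 1 / D k))" "b < dim_col (mat_diag n (\<lambda>k. 1 / D k))"
    then have ab: "a < n" "b < n" by (auto simp: mat_diag_def)
    then have "D a * N $$ (a,b) = (if a = b then 1 else 0)"
      using arg_cong[OF DN, of "\<lambda>M. M $$ (a,b)"] mat_diag_mult_left[OF Nc, of D] by simp
    then show "N $$ (a,b) = mat_diag n (\<lambda>k. 1 / D k) $$ (a,b)"
      using D ab by (auto simp: mat_diag_def field_simps)
  qed (use Nc in \<open>auto simp: mat_diag_def\<close>)
qed

text \<open>Back substitution: \<open>L\<^sup>T\<close> is unit upper triangular, so \<open>L\<^sup>T X = diag f\<close> forces the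
  \<open>j\<close>-th column of \<open>X\<close> to vanish below the diagonal, from the last row upwards.\<close>

lemma unit_lower_transpose_solve:
  assumes L: "unit_lower_triangular n L" and X: "X \<in> carrier_mat n n"
    and LX: "L\<^sup>T * X = mat_diag n f" and j: "j < n"
  shows "\<And>k. j < k \<Longrightarrow> k < n \<Longrightarrow> X $$ (k,j) = 0" and "X $$ (j,j) = f j"
proof -
  have Lc: "L \<in> carrier_mat n n" and L1: "\<forall>a<n. L $$ (a,a) = 1"
    and L0: "\<forall>a b. a < b \<longrightarrow> b < n \<longrightarrow> L $$ (a,b) = 0"
    using L unfolding unit_lower_triangular_def by auto
  have row: "mat_diag n f $$ (k,j) = X $$ (k,j)"
    if k: "k < n" and below: "\<And>m. k < m \<Longrightarrow> m < n \<Longrightarrow> X $$ (m,j) = 0" for k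
  proof -
    have "(L\<^sup>T * X) $$ (k,j) = (\<Sum>m<n. L $$ (m,k) * X $$ (m,j))"
      using index_mult_mat_sum[of "L\<^sup>T" n n X n k j] Lc X k j by simp
    also have "\<dots> = (\<Sum>m<n. if m = k then X $$ (k,j) else 0)"
    proof (intro sum.cong refl)
      fix m assume "m \<in> {..<n}"
      then show "L $$ (m,k) * X $$ (m,j) = (if m = k then X $$ (k,j) else 0)"
        using L1 L0 below k by (cases "m < k"; cases "m = k") auto
    qed
    finally show ?thesis using LX k by simp
  qed
  show zero: "X $$ (k,j) = 0" if "j < k" "k < n" for k
    using that
  proof (induction "n - k" arbitrary: k rule: less_induct)
    case (less k)
    then have "mat_diag n f $$ (k,j) = X $$ (k,j)" by (intro row) auto
    then show ?case using less.prems j by (simp add: mat_diag_def)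
  qed
  have "mat_diag n f $$ (j,j) = X $$ (j,j)" by (rule row[OF j zero])
  then show "X $$ (j,j) = f j" using j by (simp add: mat_diag_def)
qed

text \<open>Reading \<open>W L = L\<^sup>-\<^sup>T D\<^sup>-\<^sup>1\<close> off column \<open>j\<close>, where \<open>I\<close> contains the support of that
  column below the diagonal.\<close>

lemma LDLT_column_equations:
  assumes L: "unit_lower_triangular n L" and D: "\<forall>k<n. 0 < D k" and S: "S = L * mat_diag n D * L\<^sup>T"
    and SW: "S * W = 1\<^sub>m n" and W: "W \<in> carrier_mat n n" and j: "j < n"
    and I: "I \<subseteq> {j<..<n}" and supp: "\<forall>m\<in>{j<..<n} - I. L $$ (m,j) = 0"
  shows "\<And>k. k \<in> I \<Longrightarrow> W $$ (k,j) + (\<Sum>m\<in>I. W $$ (k,m) * L $$ (m,j)) = 0"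
    and "W $$ (j,j) + (\<Sum>m\<in>I. W $$ (j,m) * L $$ (m,j)) = 1 / D j"
proof -
  have Lc: "L \<in> carrier_mat n n" and L1: "\<forall>a<n. L $$ (a,a) = 1"
    and L0: "\<forall>a b. a < b \<longrightarrow> b < n \<longrightarrow> L $$ (a,b) = 0"
    using L unfolding unit_lower_triangular_def by auto
  have fin: "finite I" using I finite_subset by blast
  have WL: "(W * L) $$ (k,j) = W $$ (k,j) + (\<Sum>m\<in>I. W $$ (k,m) * L $$ (m,j))" if k: "k < n" for k
  proof -
    have "(W * L) $$ (k,j) = (\<Sum>m<n. W $$ (k,m) * L $$ (m,j))"
      by (rule index_mult_mat_sum[OF W Lc k j])
    also have "\<dots> = (\<Sum>m\<in>insert j I. W $$ (k,m) * L $$ (m,j))"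
    proof (rule sum.mono_neutral_right)
      show "\<forall>m\<in>{..<n} - insert j I. W $$ (k,m) * L $$ (m,j) = 0"
      proof
        fix m assume m: "m \<in> {..<n} - insert j I"
        then have "L $$ (m,j) = 0" using L0 supp j by (cases "m < j") auto
        then show "W $$ (k,m) * L $$ (m,j) = 0" by simp
      qed
    qed (use I j in auto)
    also have "\<dots> = W $$ (k,j) + (\<Sum>m\<in>I. W $$ (k,m) * L $$ (m,j))"
      using I L1 j fin by (subst sum.insert) auto
    finally show ?thesis .
  qed
  note solve = unit_lower_transpose_solve[OF L _ LDLT_inverse_congruence[OF L D S SW W] j]
  show "W $$ (k,j) + (\<Sum>m\<in>I. W $$ (k,m) * L $$ (m,j)) = 0" if "k \<in> I" for k
    using WL solve(1) that I W Lc by auto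
  show "W $$ (j,j) + (\<Sum>m\<in>I. W $$ (j,m) * L $$ (m,j)) = 1 / D j"
    using WL solve(2) j W Lc by simp
qed

lemma Lcol_eq_solution:
  assumes A: "submatrix C I I \<in> carrier_mat m m" and det: "det (submatrix C I I) \<noteq> 0"
    and l: "l \<in> carrier_vec m" and c: "col (submatrix C I {j}) 0 \<in> carrier_vec m"
    and sol: "submatrix C I I *\<^sub>v l = - col (submatrix C I {j}) 0"
  shows "Lcol C I j = l"
proof -
  have "submatrix C I I \<in> Units (ring_mat TYPE(real) m ())"
    by (rule det_non_zero_imp_unit[OF A det])
  then obtain B where B: "mat_inverse (submatrix C I I) = Some B"
    using mat_inverse(1)[OF A, where b="()"] by fastforce
  then have BA: "B * submatrix C I I = 1\<^sub>m m" "B \<in> carrier_mat m m" using mat_inverse(2)[OF A] by auto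
  have "l = B *\<^sub>v (submatrix C I I *\<^sub>v l)" using A BA l by (simp flip: assoc_mult_mat_vec)
  also have "\<dots> = - (B *\<^sub>v col (submatrix C I {j}) 0)"
    unfolding sol using carrier_matD[OF BA(2)] carrier_vecD[OF c]
    by (intro eq_vecI) (auto simp: scalar_prod_uminus_right)
  finally show ?thesis unfolding Lcol_def B by simp
qed

lemma LDLT_column_Lcol:
  assumes L: "unit_lower_triangular n L" and D: "\<forall>k<n. 0 < D k" and S: "S = L * mat_diag n D * L\<^sup>T"
    and SW: "S * W = 1\<^sub>m n" and W: "pd_mat n W" and j: "j < n"
    and I: "I \<subseteq> {j<..<n}" and supp: "\<forall>m\<in>{j<..<n} - I. L $$ (m,j) = 0"
    and C: "C \<in> carrier_mat n n"
    and CW: "\<And>a b. a \<in> insert j I \<Longrightarrow> b \<in> insert j I \<Longrightarrow> C $$ (a,b) = W $$ (a,b)"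
  shows "Lcol C I j = vec (card I) (\<lambda>q. L $$ (pick I q, j))"
    and "inverse (C $$ (j,j) + col (submatrix C I {j}) 0 \<bullet> Lcol C I j) = D j"
proof -
  have Wc: "W \<in> carrier_mat n n" using pd_mat_carrier[OF W] .
  have In: "I \<subseteq> {..<n}" using I by auto
  then have fin: "finite I" using finite_subset by blast
  have pickI: "pick I q \<in> I" if "q < card I" for q using pick_in_set that by blast
  define A where "A = submatrix C I I"
  define c where "c = col (submatrix C I {j}) 0"
  define l where "l = vec (card I) (\<lambda>q. L $$ (pick I q, j))"
  have Ac: "A \<in> carrier_mat (card I) (card I)" unfolding A_def by (rule submatrix_carrier[OF C In In])
  have AW: "A = submatrix W I I" unfolding A_def by (rule submatrix_cong[OF C Wc In In]) (simp add: CW)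
  have cc: "c \<in> carrier_vec (card I)" unfolding c_def by (rule col_submatrix_singleton(1)[OF C In j])
  have c_index: "c $ p = W $$ (pick I p, j)" if "p < card I" for p
    unfolding c_def col_submatrix_singleton(2)[OF C In j that] using CW pickI[OF that] by simp
  note eqs = LDLT_column_equations[OF L D S SW Wc j I supp]
  have "A *\<^sub>v l = - c"
  proof (rule eq_vecI)
    fix p assume "p < dim_vec (- c)"
    then have p: "p < card I" using cc by simp
    have "(A *\<^sub>v l) $ p = (\<Sum>q<card I. W $$ (pick I p, pick I q) * L $$ (pick I q, j))"
      using index_mult_mat_vec_sum[OF Ac _ p, of l] submatrix_index_pick[OF Wc In In p] AW
      by (simp add: l_def)
    also have "\<dots> = (\<Sum>m\<in>I. W $$ (pick I p, m) * L $$ (m, j))" by (rule sum_pick[OF fin])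
    also have "\<dots> = - c $ p" using eqs(1)[OF pickI[OF p]] c_index[OF p] by simp
    finally show "(A *\<^sub>v l) $ p = (- c) $ p" using p cc by simp
  qed (use Ac cc in simp)
  moreover have "det A \<noteq> 0"
    using AW pd_mat_det_pos[OF pd_mat_submatrix[OF W In]] by simp
  ultimately show Lc: "Lcol C I j = l"
    by (intro Lcol_eq_solution) (use Ac cc in \<open>simp_all add: A_def c_def l_def\<close>)
  have "c \<bullet> l = (\<Sum>q<card I. W $$ (pick I q, j) * L $$ (pick I q, j))"
    using cc by (simp add: scalar_prod_sum[of _ "card I"] c_index l_def)
  also have "\<dots> = (\<Sum>m\<in>I. W $$ (j, m) * L $$ (m, j))"
    using sum_pick[OF fin, of "\<lambda>m. W $$ (m, j) * L $$ (m, j)"] pd_mat_index_sym[OF W] In j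
    by (auto intro!: sum.cong)
  also have "\<dots> = 1 / D j - W $$ (j,j)" using eqs(2) by simp
  finally show "inverse (C $$ (j,j) + col (submatrix C I {j}) 0 \<bullet> Lcol C I j) = D j"
    using Lc CW[of j j] D j unfolding c_def by simp
qed

lemma Lmat_eq:
  assumes L: "unit_lower_triangular n L"
    and supp: "\<And>i j. j < i \<Longrightarrow> i < n \<Longrightarrow> i \<notin> higher_nbrs n adj j \<Longrightarrow> L $$ (i,j) = 0"
    and col: "\<And>j. j < n \<Longrightarrow>
      Lcol C (higher_nbrs n adj j) j = vec (card (higher_nbrs n adj j)) (\<lambda>q. L $$ (pick (higher_nbrs n adj j) q, j))"
  shows "Lmat n adj C = L"
proof (rule eq_matI)
  have Lc: "L \<in> carrier_mat n n" and L1: "\<forall>a<n. L $$ (a,a) = 1"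
    and L0: "\<forall>a b. a < b \<longrightarrow> b < n \<longrightarrow> L $$ (a,b) = 0"
    using L unfolding unit_lower_triangular_def by auto
  fix i j assume "i < dim_row L" "j < dim_col L"
  then have ij: "i < n" "j < n" using Lc by auto
  show "Lmat n adj C $$ (i,j) = L $$ (i,j)"
  proof (cases "i \<in> higher_nbrs n adj j")
    case True
    let ?I = "higher_nbrs n adj j"
    have "card {a\<in>?I. a < i} < card ?I"
      using card_less_pick_bound[OF _ True] by (auto simp: higher_nbrs_def)
    then show ?thesis
      using col[OF ij(2)] True pick_card_in_set[OF True] ij by (auto simp: Lmat_def higher_nbrs_def)
  next
    case False
    then have "i \<noteq> j \<Longrightarrow> L $$ (i,j) = 0" using supp L0 ij by (cases "i < j") auto
    then show ?thesis using False ij L1 by (auto simp: Lmat_def)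
  qed
qed (use L in \<open>auto simp: Lmat_def unit_lower_triangular_def\<close>)

lemma Dmat_eq:
  assumes "\<And>j. j < n \<Longrightarrow>
    inverse (C $$ (j,j) + col (submatrix C (higher_nbrs n adj j) {j}) 0 \<bullet> Lcol C (higher_nbrs n adj j) j) = D j"
  shows "Dmat n adj C = mat_diag n D"
proof (rule eq_matI)
  fix i j assume "i < dim_row (mat_diag n D)" "j < dim_col (mat_diag n D)"
  then have "i < n" "j < n" by (auto simp: mat_diag_def)
  then show "Dmat n adj C $$ (i,j) = mat_diag n D $$ (i,j)"
    using assms by (simp add: Dmat_def mat_diag_def)
qed (auto simp: Dmat_def mat_diag_def)

lemma glasso_LDLT:
  assumes sc: "sample_corr n \<Sigma>" and opt: "glasso_opt n \<Sigma> lam S"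
    and supp: "\<forall>i<n. \<forall>j<n. i \<noteq> j \<longrightarrow> (S $$ (i,j) \<noteq> 0 \<longleftrightarrow> \<bar>\<Sigma> $$ (i,j)\<bar> > lam)"
    and lam: "lam \<ge> 1/2" and SW: "S * W = 1\<^sub>m n" and W: "pd_mat n W"
    and peo: "natural_peo n (thr_adj n \<Sigma> lam)"
  shows "S = Lmat n (thr_adj n \<Sigma> lam) (Cpart n \<Sigma> lam) * Dmat n (thr_adj n \<Sigma> lam) (Cpart n \<Sigma> lam)
             * (Lmat n (thr_adj n \<Sigma> lam) (Cpart n \<Sigma> lam))\<^sup>T"
proof -
  define adj where "adj = thr_adj n \<Sigma> lam"
  define C where "C = Cpart n \<Sigma> lam"
  have S: "pd_mat n S" using opt unfolding glasso_opt_def by simp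
  obtain L D where L: "unit_lower_triangular n L" and D: "\<forall>k<n. 0 < D k"
    and SLD: "S = L * mat_diag n D * L\<^sup>T"
    using pd_mat_LDLT[OF S] .
  have adj_sym: "adj b a" if "adj a b" for a b
    using that sym_mat_index[of n \<Sigma> a b] sc unfolding adj_def thr_adj_def sample_corr_def psd_mat_def
    by auto
  have no_fill: "L $$ (i,j) = 0" if "j < i" "i < n" "\<not> adj i j" for i j
    by (rule LDLT_no_fill[OF L D SLD peo[folded adj_def] _ that])
      (use supp in \<open>auto simp: adj_def thr_adj_def\<close>)
  have CW: "C $$ (a,b) = W $$ (a,b)" if "a = b \<and> a < n \<or> adj a b" for a b
    using glasso_inverse_completes[OF sc opt supp lam SW W] that
    unfolding C_def adj_def pattern_def by auto
  have "Lcol C (higher_nbrs n adj j) j = vec (card (higher_nbrs n adj j)) (\<lambda>q. L $$ (pick (higher_nbrs n adj j) q, j))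
    \<and> inverse (C $$ (j,j) + col (submatrix C (higher_nbrs n adj j) {j}) 0 \<bullet> Lcol C (higher_nbrs n adj j) j) = D j"
    if j: "j < n" for j
  proof -
    let ?I = "higher_nbrs n adj j"
    have "?I \<subseteq> {j<..<n}" by (auto simp: higher_nbrs_def)
    moreover have "\<forall>m\<in>{j<..<n} - ?I. L $$ (m,j) = 0" using no_fill by (auto simp: higher_nbrs_def)
    \<comment> \<open>\<open>{j} \<union> I\<^sub>j\<close> is a clique, so \<open>C\<close> is specified on all of it\<close>
    moreover have "C $$ (a,b) = W $$ (a,b)" if "a \<in> insert j ?I" "b \<in> insert j ?I" for a b
      using that j peo adj_sym CW unfolding natural_peo_def higher_nbrs_def adj_def[symmetric]
      by (metis (mono_tags, lifting) insert_iff mem_Collect_eq)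
    moreover have "C \<in> carrier_mat n n" unfolding C_def Cpart_def by simp
    ultimately show ?thesis using LDLT_column_Lcol[OF L D SLD SW W j] by blast
  qed
  moreover have "i \<notin> higher_nbrs n adj j \<Longrightarrow> L $$ (i,j) = 0" if "j < i" "i < n" for i j
    using no_fill that by (simp add: higher_nbrs_def)
  ultimately have "Lmat n adj C = L" "Dmat n adj C = mat_diag n D"
    by (intro Lmat_eq[OF L] Dmat_eq; blast)+
  then show ?thesis using SLD unfolding adj_def C_def by simp
qed

theorem theorem3:
  fixes d :: nat and \<Sigma> S :: "real mat" and lam :: real
  assumes "sample_corr d \<Sigma>"
    and "lam > 0"
    and "glasso_opt d \<Sigma> lam S"
    and "\<forall>i<d. \<forall>j<d. i \<noteq> j \<longrightarrow> (S $$ (i,j) \<noteq> 0 \<longleftrightarrow> \<bar>\<Sigma> $$ (i,j)\<bar> > lam)"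
    and "lam \<ge> 1/2"
  shows "unique_maxdet_completion d (pattern d \<Sigma> lam) (Cpart d \<Sigma> lam) (the (mat_inverse S))
    \<and> (chordal d (thr_adj d \<Sigma> lam) \<longrightarrow> natural_peo d (thr_adj d \<Sigma> lam) \<longrightarrow>
         S = Lmat d (thr_adj d \<Sigma> lam) (Cpart d \<Sigma> lam) * Dmat d (thr_adj d \<Sigma> lam) (Cpart d \<Sigma> lam)
             * (Lmat d (thr_adj d \<Sigma> lam) (Cpart d \<Sigma> lam))\<^sup>T)"
proof -
  have S: "pd_mat d S" using assms(3) unfolding glasso_opt_def by simp
  obtain W where W: "mat_inverse S = Some W" "S * W = 1\<^sub>m d" "W * S = 1\<^sub>m d" "pd_mat d W"
    using pd_mat_inverse[OF S] .
  have "unique_maxdet_completion d (pattern d \<Sigma> lam) (Cpart d \<Sigma> lam) W"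
    by (rule glasso_inverse_unique_maxdet_completion[OF assms(1,3,4,5) W(2-4)])
  \<comment> \<open>Chordality only guarantees that a perfect elimination ordering exists; here it is given.\<close>
  moreover have "natural_peo d (thr_adj d \<Sigma> lam) \<Longrightarrow>
      S = Lmat d (thr_adj d \<Sigma> lam) (Cpart d \<Sigma> lam) * Dmat d (thr_adj d \<Sigma> lam) (Cpart d \<Sigma> lam)
        * (Lmat d (thr_adj d \<Sigma> lam) (Cpart d \<Sigma> lam))\<^sup>T"
    by (rule glasso_LDLT[OF assms(1,3,4,5) W(2,4)])
  ultimately show ?thesis using W(1) by simp
qed

end
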